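(* Assume $\rho<1$ and that the limits $f_j(z)=\lim_{n\to\infty}\mathbb E[z^{X_n}1_{\{J_{n+1}=j\}}]$, $|z|\le1$, exist (so $f_j(0)=\lim_n\mathbb P(X_n=0,J_{n+1}=j)$ and $f_j(1)=\pi_j$). Then for $|z|\le 1$ and $j=1,\dots,N$, $$(z-A_{jj}(z))f_j(z)-\sum_{i\neq j}A_{ij}(z)f_i(z)=(B(z)-1)\sum_{i=1}^N A_{ij}(z)f_i(0),$$ i.e. $M(z)^T f(z)=(B(z)-1)A(z)^Tf(0)$ with $f(z)=(f_1(z),\dots,f_N(z))^T$. Moreover, if $\mathbb E[B]<\infty$, then $$\sum_{i=1}^N f_i(0)=\frac{1-\rho}{\mathbb E[B]}.$$
   Context: Let $N\ge 2$. For $i,j\in\{1,\dots,N\}$ let $A_{ij}(z)=\sum_{k\ge 0}a_{ij}(k)z^k$ with $a_{ij}(k)\ge0$, $P_{ij}=A_{ij}(1)$, $\alpha_{ij}=A'_{ij}(1)<\infty$; $P=(P_{ij})$ is stochastic and irreducible with stationary distribution $\pi$, and $\rho=\sum_{i,j}\pi_i\alpha_{ij}$. $A(z)=(A_{ij}(z))$ and $M(z)=zI-A(z)$. Let $(A_n,J_{n+1})_{n\ge1}$ be random variables with $A_n\in\{0,1,\dots\}$, $J_n\in\{1,\dots,N\}$, such that conditionally on $J_n=i$ and on all earlier variables and all $B_m$, $\mathbb P(A_n=k,J_{n+1}=j)=a_{ij}(k)$. Let $(B_n)$ be i.i.d. positive-integer-valued with generating function $B(z)$ and mean $\mathbb E[B]$,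 independent of everything else. Let $X_0$ be a nonnegative integer and $X_n=X_{n-1}-1+A_n$ if $X_{n-1}\ge1$, $X_n=A_n+B_n-1$ if $X_{n-1}=0$. *)

theory Defs
  imports "HOL-Probability.Probability"
begin

definition gf :: "(nat \<Rightarrow> real) \<Rightarrow> complex \<Rightarrow> complex" where
  "gf c z = (\<Sum>k. complex_of_real (c k) * z ^ k)"

fun Xproc :: "nat \<Rightarrow> (nat \<Rightarrow> 'a \<Rightarrow> nat) \<Rightarrow> (nat \<Rightarrow> 'a \<Rightarrow> nat) \<Rightarrow> nat \<Rightarrow> 'a \<Rightarrow> nat" where
  "Xproc X0 A B 0 \<omega> = X0"
| "Xproc X0 A B (Suc n) \<omega> =
     (if Xproc X0 A B n \<omega> \<ge> 1 then Xproc X0 A B n \<omega> - 1 + A (Suc n) \<omega>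
      else A (Suc n) \<omega> + B (Suc n) \<omega> - 1)"

definition stochastic_mat :: "nat \<Rightarrow> (nat \<Rightarrow> nat \<Rightarrow> real) \<Rightarrow> bool" where
  "stochastic_mat N P \<longleftrightarrow> (\<forall>i\<in>{1..N}. (\<forall>j\<in>{1..N}. P i j \<ge> 0) \<and> (\<Sum>j\<in>{1..N}. P i j) = 1)"

definition irreducible_mat :: "nat \<Rightarrow> (nat \<Rightarrow> nat \<Rightarrow> real) \<Rightarrow> bool" where
  "irreducible_mat N P \<longleftrightarrow>
     (\<forall>i\<in>{1..N}. \<forall>j\<in>{1..N}. (i, j) \<in> {(k, l). k \<in> {1..N} \<and> l \<in> {1..N} \<and> P k l > 0}\<^sup>+)"

definition stationary_dist :: "nat \<Rightarrow> (nat \<Rightarrow> nat \<Rightarrow> real) \<Rightarrow> (nat \<Rightarrow> real) \<Rightarrow> bool" where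
  "stationary_dist N P \<pi> \<longleftrightarrow> (\<forall>i\<in>{1..N}. \<pi> i \<ge> 0) \<and> (\<Sum>i\<in>{1..N}. \<pi> i) = 1 \<and>
     (\<forall>j\<in>{1..N}. (\<Sum>i\<in>{1..N}. \<pi> i * P i j) = \<pi> j)"

end

theory Submission
  imports Defs
begin

text \<open>
  Write \<open>g\<^sub>n\<^sub>,\<^sub>i(z) = E[z\<^bsup>X\<^sub>n\<^esup>; J\<^sub>n\<^sub>+\<^sub>1 = i]\<close>. Conditionally on the path of \<open>(J, A, B)\<close> up to
  time \<open>n\<close>, the joint law makes the next increment \<open>(J\<^sub>n\<^sub>+\<^sub>2, A\<^sub>n\<^sub>+\<^sub>1, B\<^sub>n\<^sub>+\<^sub>1)\<close> have law
  \<open>a\<^sub>i\<^sub>j(k) pB(b)\<close> with \<open>i = J\<^sub>n\<^sub>+\<^sub>1\<close>. Since \<open>X\<^sub>n\<^sub>+\<^sub>1 + 1\<close> is \<open>A\<^sub>n\<^sub>+\<^sub>1 + X\<^sub>n\<close> if \<open>X\<^sub>n \<ge> 1\<close>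
  and \<open>A\<^sub>n\<^sub>+\<^sub>1 + B\<^sub>n\<^sub>+\<^sub>1\<close> otherwise, this gives
  \<open>z g\<^sub>n\<^sub>+\<^sub>1\<^sub>,\<^sub>j(z) = \<Sum>\<^sub>i A\<^sub>i\<^sub>j(z) (g\<^sub>n\<^sub>,\<^sub>i(z) - g\<^sub>n\<^sub>,\<^sub>i(0) + B(z) g\<^sub>n\<^sub>,\<^sub>i(0))\<close>,
  and letting \<open>n \<rightarrow> \<infinity>\<close> yields the functional equation.

  At \<open>z = 1\<close> the equation says that \<open>f(1)\<close> is invariant for \<open>P\<close>, so \<open>f(1) = \<pi>\<close> by irreducibility.
  On \<open>[0, 1]\<close> the \<open>f\<^sub>i\<close> are real and increasing, and their left limits \<open>L\<^sub>i\<close> at \<open>1\<close> again form an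
  invariant vector with \<open>L \<le> \<pi>\<close>, hence \<open>L = c \<pi>\<close> with \<open>c \<le> 1\<close>. Summing the equation over \<open>j\<close>,
  dividing by \<open>1 - t\<close> and letting \<open>t \<rightarrow> 1\<close> gives
  \<open>E[B] \<Sum>\<^sub>i f\<^sub>i(0) = \<Sum>\<^sub>i (1 - \<alpha>\<^sub>i) L\<^sub>i = c (1 - \<rho>) \<le> 1 - \<rho>\<close>, where \<open>\<alpha>\<^sub>i = \<Sum>\<^sub>j \<alpha>\<^sub>i\<^sub>j\<close>.
  Conversely, \<open>E X\<^sub>n\<^sub>+\<^sub>1 = E X\<^sub>n - 1 + E \<alpha>\<^bsub>J\<^sub>n\<^sub>+\<^sub>1\<^esub> + E[B] P(X\<^sub>n = 0)\<close> and \<open>E X\<^sub>n \<ge> 0\<close> force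
  the limiting drift \<open>\<rho> + E[B] \<Sum>\<^sub>i f\<^sub>i(0) - 1\<close> to be nonnegative.
\<close>

\<comment> \<open>\<open>abs_summable_on\<close> is taken from \<open>Infinite_Set_Sum\<close>, which goes with \<open>infsetsum\<close>.\<close>
no_notation Infinite_Sum.abs_summable_on (infixr "abs'_summable'_on" 46)

section \<open>Invariant vectors of irreducible stochastic matrices\<close>

definition invariant_vector :: "nat \<Rightarrow> (nat \<Rightarrow> nat \<Rightarrow> real) \<Rightarrow> (nat \<Rightarrow> real) \<Rightarrow> bool" where
  "invariant_vector N P v \<longleftrightarrow> (\<forall>j\<in>{1..N}. (\<Sum>i\<in>{1..N}. v i * P i j) = v j)"

lemma invariant_vector_diff:
  assumes "invariant_vector N P v" "invariant_vector N P w"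
  shows "invariant_vector N P (\<lambda>i. v i - w i)"
  using assms by (simp add: invariant_vector_def left_diff_distrib sum_subtractf)

lemma invariant_vector_cmult:
  assumes "invariant_vector N P v"
  shows "invariant_vector N P (\<lambda>i. c * v i)"
  using assms by (simp add: invariant_vector_def sum_distrib_left[symmetric] mult.assoc)

lemma stationary_dist_invariant: "stationary_dist N P \<pi> \<Longrightarrow> invariant_vector N P \<pi>"
  by (simp add: stationary_dist_def invariant_vector_def)

lemma invariant_vector_zero_propagates:
  assumes stoch: "stochastic_mat N P" and irr: "irreducible_mat N P"
    and inv: "invariant_vector N P u" and nonneg: "\<And>i. i \<in> {1..N} \<Longrightarrow> u i \<ge> 0"
    and j: "j \<in> {1..N}" and uj: "u j = 0" and i: "i \<in> {1..N}"
  shows "u i = 0"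
proof -
  define R where "R = {(k, l). k \<in> {1..N} \<and> l \<in> {1..N} \<and> P k l > 0}"
  have edge: "u k = 0" if "u l = 0" and "(k, l) \<in> R" for k l
  proof -
    from that have k: "k \<in> {1..N}" and l: "l \<in> {1..N}" and pkl: "P k l > 0" by (auto simp: R_def)
    have "u k * P k l \<le> (\<Sum>i\<in>{1..N}. u i * P i l)"
      using k nonneg stoch l by (intro member_le_sum) (auto simp: stochastic_mat_def)
    also have "\<dots> = 0" using inv l \<open>u l = 0\<close> by (simp add: invariant_vector_def)
    finally show "u k = 0" using nonneg[OF k] pkl by (simp add: mult_le_0_iff)
  qed
  have "u l = 0 \<longrightarrow> u k = 0" if "(k, l) \<in> R\<^sup>+" for k l
    using that
  proof (induction rule: trancl_induct)
    case (base l)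
    then show ?case using edge by blast
  next
    case (step l l')
    then show ?case using edge by blast
  qed
  moreover have "(i, j) \<in> R\<^sup>+" using irr i j by (simp add: irreducible_mat_def R_def)
  ultimately show ?thesis using uj by blast
qed

lemma invariant_vector_abs:
  assumes stoch: "stochastic_mat N P" and inv: "invariant_vector N P w"
  shows "invariant_vector N P (\<lambda>i. \<bar>w i\<bar>)"
proof -
  have le: "\<bar>w j\<bar> \<le> (\<Sum>i\<in>{1..N}. \<bar>w i\<bar> * P i j)" if j: "j \<in> {1..N}" for j
  proof -
    have "\<bar>w j\<bar> = \<bar>\<Sum>i\<in>{1..N}. w i * P i j\<bar>" using inv j by (simp add: invariant_vector_def)
    also have "\<dots> \<le> (\<Sum>i\<in>{1..N}. \<bar>w i * P i j\<bar>)" by (rule sum_abs)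
    also have "\<dots> = (\<Sum>i\<in>{1..N}. \<bar>w i\<bar> * P i j)"
      using stoch j by (intro sum.cong) (auto simp: abs_mult stochastic_mat_def)
    finally show ?thesis .
  qed
  have total: "(\<Sum>j\<in>{1..N}. \<Sum>i\<in>{1..N}. \<bar>w i\<bar> * P i j) = (\<Sum>j\<in>{1..N}. \<bar>w j\<bar>)"
    using stoch by (subst sum.swap) (simp add: sum_distrib_left[symmetric] stochastic_mat_def)
  show ?thesis unfolding invariant_vector_def
  proof (rule ballI, rule ccontr)
    fix j assume j: "j \<in> {1..N}" and ne: "(\<Sum>i\<in>{1..N}. \<bar>w i\<bar> * P i j) \<noteq> \<bar>w j\<bar>"
    have "(\<Sum>j\<in>{1..N}. \<bar>w j\<bar>) < (\<Sum>j\<in>{1..N}. \<Sum>i\<in>{1..N}. \<bar>w i\<bar> * P i j)"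
    proof (rule sum_strict_mono_ex1)
      show "\<forall>x\<in>{1..N}. \<bar>w x\<bar> \<le> (\<Sum>i\<in>{1..N}. \<bar>w i\<bar> * P i x)" using le by blast
      show "\<exists>a\<in>{1..N}. \<bar>w a\<bar> < (\<Sum>i\<in>{1..N}. \<bar>w i\<bar> * P i a)"
        using le[OF j] ne j by (intro bexI[of _ j]) auto
    qed simp
    then show False using total by simp
  qed
qed

lemma invariant_vector_sum_zero:
  assumes stoch: "stochastic_mat N P" and irr: "irreducible_mat N P"
    and inv: "invariant_vector N P w" and sum0: "(\<Sum>i\<in>{1..N}. w i) = 0" and j: "j \<in> {1..N}"
  shows "w j = 0"
proof -
  have nonpos: "v j \<le> 0" if inv_v: "invariant_vector N P v" and "(\<Sum>i\<in>{1..N}. v i) = 0" for v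
  proof (rule ccontr)
    assume "\<not> v j \<le> 0"
    define m where "m i = \<bar>v i\<bar> - v i" for i
    have inv_m: "invariant_vector N P m"
      unfolding m_def by (intro invariant_vector_diff invariant_vector_abs stoch inv_v)
    have "m i = 0" if "i \<in> {1..N}" for i
      using \<open>\<not> v j \<le> 0\<close>
      by (intro invariant_vector_zero_propagates[OF stoch irr inv_m _ j _ that]) (auto simp: m_def)
    then have "v i \<ge> 0" if "i \<in> {1..N}" for i
      using that abs_ge_zero[of "v i"] by (auto simp: m_def)
    then have "v j \<le> (\<Sum>i\<in>{1..N}. v i)" using j by (intro member_le_sum) auto
    then show False using \<open>\<not> v j \<le> 0\<close> \<open>(\<Sum>i\<in>{1..N}. v i) = 0\<close> by simp
  qed
  have "w j \<le> 0" by (rule nonpos[OF inv sum0])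
  moreover have "- w j \<le> 0"
    using nonpos[OF invariant_vector_cmult[OF inv, of "-1"]] sum0 by (simp add: sum_negf)
  ultimately show ?thesis by simp
qed

lemma invariant_vector_eq_stationary:
  assumes stoch: "stochastic_mat N P" and irr: "irreducible_mat N P"
    and \<pi>: "stationary_dist N P \<pi>" and inv: "invariant_vector N P v" and j: "j \<in> {1..N}"
  shows "v j = (\<Sum>i\<in>{1..N}. v i) * \<pi> j"
proof -
  define s where "s = (\<Sum>i\<in>{1..N}. v i)"
  have "invariant_vector N P (\<lambda>i. v i - s * \<pi> i)"
    by (intro invariant_vector_diff inv invariant_vector_cmult stationary_dist_invariant \<pi>)
  moreover have "(\<Sum>i\<in>{1..N}. v i - s * \<pi> i) = 0"
    using \<pi> by (simp add: s_def sum_subtractf sum_distrib_left[symmetric] stationary_dist_def)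
  ultimately have "v j - s * \<pi> j = 0" by (rule invariant_vector_sum_zero[OF stoch irr _ _ j])
  then show ?thesis by (simp add: s_def)
qed

section \<open>Integrals of functions of countably-valued random variables\<close>

lemma nn_integral_countable_rv:
  fixes W :: "'a \<Rightarrow> 'c::countable"
  assumes W: "W \<in> measurable M (count_space UNIV)"
  shows "(\<integral>\<^sup>+\<omega>. G (W \<omega>) \<partial>M)
       = (\<integral>\<^sup>+c. emeasure M {\<omega>\<in>space M. W \<omega> = c} * G c \<partial>count_space UNIV)"
proof -
  have ev: "{\<omega>\<in>space M. W \<omega> = c} \<in> sets M" for c
    using W by (auto simp: measurable_count_space_eq2_countable vimage_def Int_def conj_commute)
  have "(\<integral>\<^sup>+\<omega>. G (W \<omega>) \<partial>M)
      = (\<integral>\<^sup>+\<omega>. \<integral>\<^sup>+c. G c * indicator {\<omega>'\<in>space M. W \<omega>' = c} \<omega> \<partial>count_space UNIV \<partial>M)"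
  proof (intro nn_integral_cong)
    fix \<omega> assume "\<omega> \<in> space M"
    then have "(\<lambda>c. G c * indicator {\<omega>'\<in>space M. W \<omega>' = c} \<omega>) = (\<lambda>c. G (W \<omega>) * indicator {W \<omega>} c)"
      by (auto simp: indicator_def fun_eq_iff)
    then show "G (W \<omega>) = (\<integral>\<^sup>+c. G c * indicator {\<omega>'\<in>space M. W \<omega>' = c} \<omega> \<partial>count_space UNIV)"
      by (simp add: nn_integral_cmult_indicator)
  qed
  also have "\<dots> = (\<integral>\<^sup>+c. \<integral>\<^sup>+\<omega>. G c * indicator {\<omega>'\<in>space M. W \<omega>' = c} \<omega> \<partial>M \<partial>count_space UNIV)"
    using ev by (intro nn_integral_count_space_nn_integral) auto
  also have "\<dots> = (\<integral>\<^sup>+c. emeasure M {\<omega>\<in>space M. W \<omega> = c} * G c \<partial>count_space UNIV)"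
    by (intro nn_integral_cong) (simp add: nn_integral_cmult_indicator ev mult.commute)
  finally show ?thesis .
qed

lemma (in prob_space) abs_summable_countable_rv:
  fixes W :: "'a \<Rightarrow> 'c::countable"
  assumes W: "W \<in> measurable M (count_space UNIV)"
  shows "(\<lambda>c. prob {\<omega>\<in>space M. W \<omega> = c}) abs_summable_on UNIV"
proof -
  have "(\<integral>\<^sup>+c. ennreal (prob {\<omega>\<in>space M. W \<omega> = c}) \<partial>count_space UNIV) = (\<integral>\<^sup>+\<omega>. 1 \<partial>M)"
    using nn_integral_countable_rv[OF W, of "\<lambda>_. 1"] by (simp add: emeasure_eq_measure)
  then show ?thesis unfolding abs_summable_on_def
    by (intro integrableI_nonneg) (auto simp: emeasure_space_1)
qed

lemma (in prob_space) integral_countable_rv: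
  fixes W :: "'a \<Rightarrow> 'c::countable" and F :: "'c \<Rightarrow> 'b::{banach,second_countable_topology}"
  assumes W: "W \<in> measurable M (count_space UNIV)"
    and S: "(\<lambda>c. prob {\<omega>\<in>space M. W \<omega> = c} *\<^sub>R F c) abs_summable_on UNIV"
  shows "integral\<^sup>L M (\<lambda>\<omega>. F (W \<omega>)) = infsetsum (\<lambda>c. prob {\<omega>\<in>space M. W \<omega> = c} *\<^sub>R F c) UNIV"
proof -
  define p where "p c = prob {\<omega>\<in>space M. W \<omega> = c}" for c
  have D: "distr M (count_space UNIV) W = density (count_space UNIV) p"
  proof (rule measure_eqI_countable'[where A=UNIV])
    fix c :: 'c
    have "emeasure (distr M (count_space UNIV) W) {c} = emeasure M (W -` {c} \<inter> space M)"
      using W by (simp add: emeasure_distr)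
    also have "W -` {c} \<inter> space M = {\<omega>\<in>space M. W \<omega> = c}" by auto
    also have "emeasure M \<dots> = emeasure (density (count_space UNIV) p) {c}"
      by (simp add: p_def emeasure_eq_measure emeasure_density nn_integral_count_space_indicator)
    finally show "emeasure (distr M (count_space UNIV) W) {c} = emeasure (density (count_space UNIV) p) {c}" .
  qed auto
  have "integral\<^sup>L M (\<lambda>\<omega>. F (W \<omega>)) = integral\<^sup>L (distr M (count_space UNIV) W) F"
    using W by (subst integral_distr) auto
  also have "\<dots> = integral\<^sup>L (count_space UNIV) (\<lambda>c. p c *\<^sub>R F c)"
    unfolding D by (subst integral_density) (auto simp: p_def)
  finally show ?thesis by (simp add: infsetsum_def p_def)
qed

lemma (in prob_space) integral_countable_rv_bounded:
  fixes W :: "'a \<Rightarrow> 'c::countable" and F :: "'c \<Rightarrow> 'b::{banach,second_countable_topology}"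
  assumes W: "W \<in> measurable M (count_space UNIV)" and bnd: "\<And>c. norm (F c) \<le> C"
  shows "(\<lambda>c. prob {\<omega>\<in>space M. W \<omega> = c} *\<^sub>R F c) abs_summable_on UNIV"
    and "integral\<^sup>L M (\<lambda>\<omega>. F (W \<omega>)) = infsetsum (\<lambda>c. prob {\<omega>\<in>space M. W \<omega> = c} *\<^sub>R F c) UNIV"
proof -
  show S: "(\<lambda>c. prob {\<omega>\<in>space M. W \<omega> = c} *\<^sub>R F c) abs_summable_on UNIV"
  proof (rule abs_summable_on_comparison_test')
    show "(\<lambda>c. C * prob {\<omega>\<in>space M. W \<omega> = c}) abs_summable_on UNIV"
      using abs_summable_countable_rv[OF W] by (rule abs_summable_on_cmult_right)
    show "norm (prob {\<omega>\<in>space M. W \<omega> = c} *\<^sub>R F c) \<le> C * prob {\<omega>\<in>space M. W \<omega> = c}" for c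
      using bnd[of c] by (simp add: mult.commute mult_right_mono)
  qed
  then show "integral\<^sup>L M (\<lambda>\<omega>. F (W \<omega>)) = infsetsum (\<lambda>c. prob {\<omega>\<in>space M. W \<omega> = c} *\<^sub>R F c) UNIV"
    by (rule integral_countable_rv[OF W])
qed

lemma nn_integral_count_space_pair:
  fixes G :: "'a::countable \<times> 'b::countable \<Rightarrow> ennreal"
  shows "(\<integral>\<^sup>+x. \<integral>\<^sup>+y. G (x, y) \<partial>count_space UNIV \<partial>count_space UNIV) = (\<integral>\<^sup>+p. G p \<partial>count_space UNIV)"
proof -
  have "count_space (UNIV::'a set) \<Otimes>\<^sub>M count_space (UNIV::'b set) = count_space UNIV"
    by (subst pair_measure_countable) auto
  then show ?thesis
    using sigma_finite_measure.nn_integral_fst[OF sigma_finite_measure_count_space, of G "count_space UNIV"]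
    by simp
qed

lemma nn_integral_count_space_pair_mult:
  fixes g :: "'a::countable \<Rightarrow> ennreal" and h :: "'b::countable \<Rightarrow> ennreal"
  shows "(\<integral>\<^sup>+p. g (fst p) * h (snd p) \<partial>count_space UNIV)
       = (\<integral>\<^sup>+x. g x \<partial>count_space UNIV) * (\<integral>\<^sup>+y. h y \<partial>count_space UNIV)"
  using nn_integral_count_space_pair[of "\<lambda>p. g (fst p) * h (snd p)"]
  by (simp add: nn_integral_cmult nn_integral_multc)

lemma nn_integral_count_space_nat_real:
  assumes "\<And>k. c k \<ge> 0" and "summable c"
  shows "(\<integral>\<^sup>+k. ennreal (c k) \<partial>count_space UNIV) = ennreal (\<Sum>k. c k)"
  using assms by (simp add: nn_integral_count_space_nat suminf_ennreal2)

lemma nn_integral_count_space_moment: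
  assumes "\<And>k. c k \<ge> 0" and "summable (\<lambda>k. real k * c k)"
  shows "(\<integral>\<^sup>+k. ennreal (c k) * of_nat k \<partial>count_space UNIV) = ennreal (\<Sum>k. real k * c k)"
proof -
  have "(\<integral>\<^sup>+k. ennreal (c k) * of_nat k \<partial>count_space UNIV) = (\<integral>\<^sup>+k. ennreal (real k * c k) \<partial>count_space UNIV)"
    using assms(1) by (intro nn_integral_cong) (simp add: ennreal_mult ennreal_of_nat_eq_real_of_nat mult.commute)
  also have "\<dots> = ennreal (\<Sum>k. real k * c k)"
    using assms by (intro nn_integral_count_space_nat_real) simp_all
  finally show ?thesis .
qed

section \<open>Series near \<open>t = 1\<close> and partial sums\<close>

definition gf_real :: "(nat \<Rightarrow> real) \<Rightarrow> real \<Rightarrow> real" where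
  "gf_real c t = (\<Sum>k. c k * t ^ k)"

text \<open>For \<open>t < 1\<close> this is the difference quotient \<open>(gf_real c 1 - gf_real c t) / (1 - t)\<close>.\<close>
definition slope_at_one :: "(nat \<Rightarrow> real) \<Rightarrow> real \<Rightarrow> real" where
  "slope_at_one c t = (\<Sum>k. c k * (\<Sum>l<k. t ^ l))"

lemma sum_powers_bounds:
  fixes t :: real
  assumes "0 \<le> t" "t \<le> 1"
  shows "0 \<le> (\<Sum>l<k. t ^ l)" and "(\<Sum>l<k. t ^ l) \<le> real k"
proof -
  show "0 \<le> (\<Sum>l<k. t ^ l)" using assms by (auto intro: sum_nonneg)
  have "(\<Sum>l<k. t ^ l) \<le> (\<Sum>l<k. 1)" by (rule sum_mono) (use assms in \<open>simp add: power_le_one\<close>)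
  then show "(\<Sum>l<k. t ^ l) \<le> real k" by simp
qed

lemma norm_slope_term_le:
  assumes "c k \<ge> 0" "0 \<le> t" "t \<le> 1"
  shows "norm (c k * (\<Sum>l<k. t ^ l)) \<le> real k * c k"
  using assms mult_left_mono[OF sum_powers_bounds(2)[OF assms(2,3)] assms(1)]
    sum_powers_bounds(1)[OF assms(2,3)] by (simp add: mult.commute)

lemma summable_slope_at_one:
  assumes "\<And>k. c k \<ge> 0" and "summable (\<lambda>k. real k * c k)" and "0 \<le> t" "t \<le> 1"
  shows "summable (\<lambda>k. c k * (\<Sum>l<k. t ^ l))"
  by (rule summable_comparison_test[OF _ assms(2)])
    (use assms in \<open>blast intro: norm_slope_term_le\<close>)

lemma gf_real_eq_minus_slope:
  assumes c: "\<And>k. c k \<ge> 0" and s0: "summable c" and s1: "summable (\<lambda>k. real k * c k)"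
    and t: "0 \<le> t" "t \<le> 1"
  shows "gf_real c t = (\<Sum>k. c k) - (1 - t) * slope_at_one c t"
proof -
  have termwise: "c k * t ^ k = c k - (1 - t) * (c k * (\<Sum>l<k. t ^ l))" for k
  proof -
    have "c k * t ^ k = c k - c k * (1 - t ^ k)" by (simp add: algebra_simps)
    then show ?thesis unfolding one_diff_power_eq by (simp add: mult_ac)
  qed
  have S: "summable (\<lambda>k. c k * (\<Sum>l<k. t ^ l))"
    by (rule summable_slope_at_one[OF c s1 t])
  have "gf_real c t = (\<Sum>k. c k - (1 - t) * (c k * (\<Sum>l<k. t ^ l)))"
    unfolding gf_real_def termwise ..
  also have "\<dots> = (\<Sum>k. c k) - (1 - t) * slope_at_one c t"
    using S s0 by (simp add: suminf_diff[symmetric] suminf_mult slope_at_one_def summable_mult)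
  finally show ?thesis .
qed

lemma slope_at_one_tendsto:
  assumes c: "\<And>k. c k \<ge> 0" and s1: "summable (\<lambda>k. real k * c k)"
    and t: "t \<longlonglongrightarrow> 1" "\<And>m. 0 \<le> t m" "\<And>m. t m \<le> 1"
  shows "(\<lambda>m. slope_at_one c (t m)) \<longlonglongrightarrow> (\<Sum>k. real k * c k)"
proof -
  have "(\<lambda>m. c k * (\<Sum>l<k. t m ^ l)) \<longlonglongrightarrow> c k * (\<Sum>l<k. 1 ^ l)" for k
    by (intro tendsto_intros t(1))
  then have lim: "(\<lambda>m. c k * (\<Sum>l<k. t m ^ l)) \<longlonglongrightarrow> real k * c k" for k
    by (simp add: mult.commute)
  have "eventually (\<lambda>(k, m). norm (c k * (\<Sum>l<k. t m ^ l)) \<le> real k * c k) (at_top \<times>\<^sub>F sequentially)"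
    by (intro always_eventually, clarify, rule norm_slope_term_le) (use c t in auto)
  then show ?thesis
    unfolding slope_at_one_def using tannerys_theorem[OF lim _ s1] by simp
qed

lemma gf_real_tendsto_at_one:
  assumes c: "\<And>k. c k \<ge> 0" and s0: "summable c" and s1: "summable (\<lambda>k. real k * c k)"
    and t: "t \<longlonglongrightarrow> 1" "\<And>m. 0 \<le> t m" "\<And>m. t m \<le> 1"
  shows "(\<lambda>m. gf_real c (t m)) \<longlonglongrightarrow> (\<Sum>k. c k)"
proof -
  have "(\<lambda>m. (\<Sum>k. c k) - (1 - t m) * slope_at_one c (t m)) \<longlonglongrightarrow> (\<Sum>k. c k) - (1 - 1) * (\<Sum>k. real k * c k)"
    by (intro tendsto_intros t(1) slope_at_one_tendsto[OF c s1 t])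
  then show ?thesis using gf_real_eq_minus_slope[OF c s0 s1 t(2,3)] by simp
qed

lemma gf_of_real:
  assumes c: "\<And>k. c k \<ge> 0" and s: "summable c" and t: "0 \<le> t" "t \<le> 1"
  shows "gf c (complex_of_real t) = complex_of_real (gf_real c t)"
proof -
  have "summable (\<lambda>k. c k * t ^ k)"
    by (rule summable_comparison_test[OF _ s])
      (use c t in \<open>auto intro!: exI[of _ 0] simp: abs_mult mult_left_le power_le_one\<close>)
  then show ?thesis unfolding gf_def gf_real_def by (simp add: suminf_of_real)
qed

lemma gf_eq_suminf_scaleR: "gf c z = (\<Sum>k. c k *\<^sub>R z ^ k)"
  by (simp add: gf_def scaleR_conv_of_real)

lemma nonneg_limit_if_partial_sums_bounded_below:
  fixes c :: "nat \<Rightarrow> real"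
  assumes lim: "c \<longlonglongrightarrow> l" and bnd: "\<And>n. C + (\<Sum>m<n. c m) \<ge> 0"
  shows "l \<ge> 0"
proof (rule ccontr)
  assume "\<not> l \<ge> 0"
  then have l: "l < 0" by simp
  have "eventually (\<lambda>m. c m < l / 2) sequentially"
    using lim l by (intro order_tendstoD(2)) auto
  then obtain N0 where N0: "\<And>m. m \<ge> N0 \<Longrightarrow> c m < l / 2" by (auto simp: eventually_sequentially)
  obtain K :: nat where "real K > (C + (\<Sum>m<N0. c m)) / (- l / 2)"
    using reals_Archimedean2 by blast
  then have K: "real K * (- l / 2) > C + (\<Sum>m<N0. c m)"
    using l by (simp add: field_simps)
  have "(\<Sum>m<N0 + K. c m) = (\<Sum>m<N0. c m) + (\<Sum>m\<in>{N0..<N0+K}. c m)"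
    by (simp add: sum.atLeastLessThan_concat[symmetric] lessThan_atLeast0)
  also have "(\<Sum>m\<in>{N0..<N0+K}. c m) \<le> (\<Sum>m\<in>{N0..<N0+K}. l / 2)"
    by (rule sum_mono) (use N0 in \<open>auto intro: less_imp_le\<close>)
  finally have "C + (\<Sum>m<N0 + K. c m) < 0" using K by (simp add: algebra_simps)
  with bnd[of "N0 + K"] show False by simp
qed

section \<open>Paths of the modulating chain and the arrival process\<close>

text \<open>An increment \<open>(j, k, b)\<close> records the next phase, the number of arrivals and the batch size
  of one time step; a path is the initial phase together with the list of increments so far.\<close>
type_synonym incr = "nat \<times> nat \<times> nat"
type_synonym path = "nat \<times> incr list"

definition path_snoc :: "path \<Rightarrow> incr \<Rightarrow> path" where
  "path_snoc p z = (fst p, snd p @ [z])"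

definition path_phase :: "path \<Rightarrow> nat" where
  "path_phase p = (if snd p = [] then fst p else fst (last (snd p)))"

text \<open>Read off \<open>J t\<close>, \<open>A t\<close> and \<open>B t\<close> from a path; entry \<open>t - 1\<close> of the list holds
  \<open>(J (t + 1), A t, B t)\<close>.\<close>
definition path_J :: "path \<Rightarrow> nat \<Rightarrow> nat" where
  "path_J p t = (if t = 1 then fst p else fst (snd p ! (t - 2)))"

definition path_A :: "path \<Rightarrow> nat \<Rightarrow> nat" where
  "path_A p t = fst (snd (snd p ! (t - 1)))"

definition path_B :: "path \<Rightarrow> nat \<Rightarrow> nat" where
  "path_B p t = snd (snd (snd p ! (t - 1)))"

definition queue_step :: "nat \<Rightarrow> incr \<Rightarrow> nat" where
  "queue_step x z = (if x \<ge> 1 then x - 1 + fst (snd z) else fst (snd z) + snd (snd z) - 1)"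

lemma path_snoc_eq_iff [simp]: "path_snoc p z = path_snoc p' z' \<longleftrightarrow> p = p' \<and> z = z'"
  by (auto simp: path_snoc_def prod_eq_iff)

lemma path_J_snoc:
  assumes "length (snd p) = n" "1 \<le> t" "t \<le> Suc n"
  shows "path_J (path_snoc p z) t = path_J p t"
  using assms by (auto simp: path_J_def path_snoc_def nth_append)

lemma path_J_snoc_last: "length (snd p) = n \<Longrightarrow> path_J (path_snoc p z) (Suc (Suc n)) = fst z"
  by (auto simp: path_J_def path_snoc_def nth_append)

lemma path_J_last: "length (snd p) = n \<Longrightarrow> path_J p (Suc n) = path_phase p"
  by (cases n) (auto simp: path_J_def path_phase_def last_conv_nth)

lemma path_A_snoc: "length (snd p) = n \<Longrightarrow> 1 \<le> t \<Longrightarrow> t \<le> n \<Longrightarrow> path_A (path_snoc p z) t = path_A p t"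
  by (auto simp: path_A_def path_snoc_def nth_append)

lemma path_B_snoc: "length (snd p) = n \<Longrightarrow> 1 \<le> t \<Longrightarrow> t \<le> n \<Longrightarrow> path_B (path_snoc p z) t = path_B p t"
  by (auto simp: path_B_def path_snoc_def nth_append)

lemma path_A_snoc_last: "length (snd p) = n \<Longrightarrow> path_A (path_snoc p z) (Suc n) = fst (snd z)"
  and path_B_snoc_last: "length (snd p) = n \<Longrightarrow> path_B (path_snoc p z) (Suc n) = snd (snd z)"
  by (auto simp: path_A_def path_B_def path_snoc_def nth_append)

lemma measurable_Pair_count_space [measurable]:
  fixes f :: "'a \<Rightarrow> 'b::countable" and g :: "'a \<Rightarrow> 'c::countable"
  assumes f: "f \<in> M \<rightarrow>\<^sub>M count_space UNIV" and g: "g \<in> M \<rightarrow>\<^sub>M count_space UNIV"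
  shows "(\<lambda>x. (f x, g x)) \<in> M \<rightarrow>\<^sub>M count_space UNIV"
proof (rule measurable_compose_countable[where f="\<lambda>i x. (i, g x)", OF _ f])
  show "(\<lambda>x. (i, g x)) \<in> M \<rightarrow>\<^sub>M count_space UNIV" for i
    by (rule measurable_compose_countable[where f="\<lambda>j x. (i, j)", OF _ g]) simp
qed

locale modulated_queue = prob_space M
  for M :: "'s measure" +
  fixes N :: nat
    and a :: "nat \<Rightarrow> nat \<Rightarrow> nat \<Rightarrow> real"
    and pB :: "nat \<Rightarrow> real"
    and \<pi> :: "nat \<Rightarrow> real"
    and A J B :: "nat \<Rightarrow> 's \<Rightarrow> nat"
    and X0 :: nat
    and f :: "nat \<Rightarrow> complex \<Rightarrow> complex"
  assumes a_nonneg: "\<And>i j k. a i j k \<ge> 0"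
    and a_summable: "\<And>i j. i \<in> {1..N} \<Longrightarrow> j \<in> {1..N} \<Longrightarrow> summable (a i j)"
    and a_moment_summable: "\<And>i j. i \<in> {1..N} \<Longrightarrow> j \<in> {1..N} \<Longrightarrow> summable (\<lambda>k. real k * a i j k)"
    and P_stoch: "stochastic_mat N (\<lambda>i j. \<Sum>k. a i j k)"
    and P_irred: "irreducible_mat N (\<lambda>i j. \<Sum>k. a i j k)"
    and \<pi>_stat: "stationary_dist N (\<lambda>i j. \<Sum>k. a i j k) \<pi>"
    and pB_nonneg: "\<And>k. pB k \<ge> 0"
    and pB_0: "pB 0 = 0"
    and pB_sums: "pB sums 1"
    and A_measurable [measurable]: "\<And>n. A n \<in> M \<rightarrow>\<^sub>M count_space UNIV"
    and J_measurable [measurable]: "\<And>n. J n \<in> M \<rightarrow>\<^sub>M count_space UNIV"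
    and B_measurable [measurable]: "\<And>n. B n \<in> M \<rightarrow>\<^sub>M count_space UNIV"
    and J_range: "\<And>n \<omega>. n \<ge> 1 \<Longrightarrow> \<omega> \<in> space M \<Longrightarrow> J n \<omega> \<in> {1..N}"
    and B_pos: "\<And>n \<omega>. n \<ge> 1 \<Longrightarrow> \<omega> \<in> space M \<Longrightarrow> B n \<omega> \<ge> 1"
    and joint_law: "\<And>n m jj kk bb.
       prob {\<omega> \<in> space M. J 1 \<omega> = jj 1 \<and>
            (\<forall>t\<in>{1..n}. A t \<omega> = kk t \<and> J (Suc t) \<omega> = jj (Suc t)) \<and>
            (\<forall>t\<in>{1..m}. B t \<omega> = bb t)}
       = prob {\<omega> \<in> space M. J 1 \<omega> = jj 1}
         * (\<Prod>t\<in>{1..n}. a (jj t) (jj (Suc t)) (kk t)) * (\<Prod>t\<in>{1..m}. pB (bb t))"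
    and \<rho>_less_1: "(\<Sum>i\<in>{1..N}. \<Sum>j\<in>{1..N}. \<pi> i * (\<Sum>k. real k * a i j k)) < 1"
    and f_lim: "\<And>j z. j \<in> {1..N} \<Longrightarrow> norm z \<le> 1 \<Longrightarrow>
       (\<lambda>n. integral\<^sup>L M (\<lambda>\<omega>. z ^ Xproc X0 A B n \<omega> * indicator {\<omega>'. J (Suc n) \<omega>' = j} \<omega>))
         \<longlonglongrightarrow> f j z"
begin

abbreviation X :: "nat \<Rightarrow> 's \<Rightarrow> nat" where
  "X \<equiv> Xproc X0 A B"

definition path_upto :: "nat \<Rightarrow> 's \<Rightarrow> path" where
  "path_upto n \<omega> = (J 1 \<omega>, map (\<lambda>t. (J (Suc t) \<omega>, A t \<omega>, B t \<omega>)) [1..<Suc n])"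

definition next_incr :: "nat \<Rightarrow> 's \<Rightarrow> incr" where
  "next_incr n \<omega> = (J (Suc (Suc n)) \<omega>, A (Suc n) \<omega>, B (Suc n) \<omega>)"

definition queue_of :: "incr list \<Rightarrow> nat" where
  "queue_of l = foldl queue_step X0 l"

definition path_prob :: "nat \<Rightarrow> path \<Rightarrow> real" where
  "path_prob n p = prob {\<omega>\<in>space M. path_upto n \<omega> = p}"

definition incr_kernel :: "nat \<Rightarrow> incr \<Rightarrow> real" where
  "incr_kernel i z = (if i \<in> {1..N} \<and> fst z \<in> {1..N} then a i (fst z) (fst (snd z)) * pB (snd (snd z)) else 0)"

lemma incr_kernel_nonneg: "incr_kernel i z \<ge> 0"
  by (simp add: incr_kernel_def a_nonneg pB_nonneg)

lemma path_upto_Suc: "path_upto (Suc n) \<omega> = path_snoc (path_upto n \<omega>) (next_incr n \<omega>)"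
  by (simp add: path_upto_def next_incr_def path_snoc_def)

lemma length_path_upto: "length (snd (path_upto n \<omega>)) = n"
  by (simp add: path_upto_def)

lemma J_eq_path_phase: "J (Suc n) \<omega> = path_phase (path_upto n \<omega>)"
  by (induction n) (simp_all add: path_upto_def path_phase_def path_upto_Suc next_incr_def)

lemma X_eq_queue_of: "X n \<omega> = queue_of (snd (path_upto n \<omega>))"
  by (induction n) (simp_all add: path_upto_def queue_of_def path_upto_Suc path_snoc_def
      next_incr_def queue_step_def)

lemma measurable_next_incr [measurable]: "next_incr n \<in> M \<rightarrow>\<^sub>M count_space UNIV"
  unfolding next_incr_def by measurable

lemma measurable_path_upto [measurable]: "path_upto n \<in> M \<rightarrow>\<^sub>M count_space UNIV"
proof (induction n)
  case 0
  show ?case unfolding path_upto_def by simp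
next
  case (Suc n)
  then show ?case unfolding path_upto_Suc by measurable
qed

lemma measurable_X [measurable]: "X n \<in> M \<rightarrow>\<^sub>M count_space UNIV"
  unfolding X_eq_queue_of[abs_def] by measurable

lemma path_upto_event:
  "{\<omega>\<in>space M. path_upto n \<omega> = p} = (if length (snd p) = n then
     {\<omega> \<in> space M. J 1 \<omega> = path_J p 1 \<and>
            (\<forall>t\<in>{1..n}. A t \<omega> = path_A p t \<and> J (Suc t) \<omega> = path_J p (Suc t)) \<and>
            (\<forall>t\<in>{1..n}. B t \<omega> = path_B p t)} else {})"
proof (cases "length (snd p) = n")
  case False
  then show ?thesis using length_path_upto[of n] by auto
next
  case True
  obtain j1 l where p: "p = (j1, l)" by (cases p)
  have "map (\<lambda>t. (J (Suc t) \<omega>, A t \<omega>, B t \<omega>)) [1..<Suc n] = l \<longleftrightarrow>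
        (\<forall>t\<in>{1..n}. A t \<omega> = path_A p t \<and> J (Suc t) \<omega> = path_J p (Suc t)) \<and>
        (\<forall>t\<in>{1..n}. B t \<omega> = path_B p t)" for \<omega>
  proof -
    have "map (\<lambda>t. (J (Suc t) \<omega>, A t \<omega>, B t \<omega>)) [1..<Suc n] = l \<longleftrightarrow>
          (\<forall>i<n. (J (Suc (Suc i)) \<omega>, A (Suc i) \<omega>, B (Suc i) \<omega>) = l ! i)"
      using True p by (auto simp: list_eq_iff_nth_eq simp del: upt_Suc)
    also have "\<dots> \<longleftrightarrow> (\<forall>t\<in>{1..n}. (J (Suc t) \<omega>, A t \<omega>, B t \<omega>) = l ! (t - 1))"
    proof safe
      fix t assume "\<forall>i<n. (J (Suc (Suc i)) \<omega>, A (Suc i) \<omega>, B (Suc i) \<omega>) = l ! i" "t \<in> {1..n}"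
      then show "(J (Suc t) \<omega>, A t \<omega>, B t \<omega>) = l ! (t - 1)" by (cases t) auto
    qed auto
    finally show ?thesis
      by (simp add: p path_A_def path_J_def path_B_def prod_eq_iff ball_conj_distrib conj_ac
          del: upt_Suc)
  qed
  then show ?thesis using True by (auto simp: path_upto_def path_J_def p)
qed

lemma path_prob_eq:
  assumes "length (snd p) = n"
  shows "path_prob n p = prob {\<omega> \<in> space M. J 1 \<omega> = fst p}
     * (\<Prod>t\<in>{1..n}. a (path_J p t) (path_J p (Suc t)) (path_A p t)) * (\<Prod>t\<in>{1..n}. pB (path_B p t))"
  unfolding path_prob_def path_upto_event if_P[OF assms] by (rule joint_law[THEN trans]) (simp add: path_J_def)

lemma path_prob_snoc:
  assumes len: "length (snd p) = n"
  shows "path_prob (Suc n) (path_snoc p z)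
       = path_prob n p * a (path_phase p) (fst z) (fst (snd z)) * pB (snd (snd z))"
proof -
  have "(\<Prod>t\<in>{1..Suc n}. a (path_J (path_snoc p z) t) (path_J (path_snoc p z) (Suc t)) (path_A (path_snoc p z) t))
      = a (path_phase p) (fst z) (fst (snd z)) * (\<Prod>t\<in>{1..n}. a (path_J p t) (path_J p (Suc t)) (path_A p t))"
    using len by (subst prod.nat_ivl_Suc')
      (auto simp: path_J_snoc path_J_snoc_last path_J_last path_A_snoc path_A_snoc_last intro!: prod.cong)
  moreover have "(\<Prod>t\<in>{1..Suc n}. pB (path_B (path_snoc p z) t)) = pB (snd (snd z)) * (\<Prod>t\<in>{1..n}. pB (path_B p t))"
    using len by (subst prod.nat_ivl_Suc') (auto simp: path_B_snoc path_B_snoc_last intro!: prod.cong)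
  ultimately show ?thesis
    using len by (simp add: path_prob_eq path_snoc_def)
qed

lemma prob_path_next_incr:
  "prob {\<omega>\<in>space M. path_upto n \<omega> = p \<and> next_incr n \<omega> = z} = path_prob n p * incr_kernel (path_phase p) z"
proof -
  have event: "{\<omega>\<in>space M. path_upto n \<omega> = p \<and> next_incr n \<omega> = z}
      = {\<omega>\<in>space M. path_upto (Suc n) \<omega> = path_snoc p z}"
    by (auto simp: path_upto_Suc)
  consider (length) "length (snd p) \<noteq> n"
    | (range) "\<not> (path_phase p \<in> {1..N} \<and> fst z \<in> {1..N})"
    | (main) "length (snd p) = n" "path_phase p \<in> {1..N}" "fst z \<in> {1..N}"
    by blast
  then show ?thesis
  proof cases
    case length
    then show ?thesis
      unfolding event path_prob_def by (simp add: path_upto_event path_snoc_def)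
  next
    case range
    have "path_phase p \<in> {1..N} \<and> fst z \<in> {1..N}"
      if "\<omega> \<in> space M" "path_upto n \<omega> = p" "next_incr n \<omega> = z" for \<omega>
      using that J_range[of "Suc n" \<omega>] J_range[of "Suc (Suc n)" \<omega>]
      by (auto simp: J_eq_path_phase next_incr_def)
    then have empty: "{\<omega>\<in>space M. path_upto n \<omega> = p \<and> next_incr n \<omega> = z} = {}"
      using range by blast
    show ?thesis unfolding empty using range by (auto simp: incr_kernel_def)
  next
    case main
    then show ?thesis
      unfolding event by (simp add: path_prob_snoc incr_kernel_def path_prob_def[symmetric])
  qed
qed

lemma nn_integral_next_incr:
  "(\<integral>\<^sup>+\<omega>. G (path_upto n \<omega>) (next_incr n \<omega>) \<partial>M)
     = (\<integral>\<^sup>+\<omega>. (\<integral>\<^sup>+z. ennreal (incr_kernel (path_phase (path_upto n \<omega>)) z) * G (path_upto n \<omega>) z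
          \<partial>count_space UNIV) \<partial>M)"
proof -
  define R where "R p = (\<integral>\<^sup>+z. ennreal (incr_kernel (path_phase p) z) * G p z \<partial>count_space UNIV)" for p
  have "(\<integral>\<^sup>+\<omega>. G (path_upto n \<omega>) (next_incr n \<omega>) \<partial>M)
      = (\<integral>\<^sup>+\<omega>. case_prod G (path_upto n \<omega>, next_incr n \<omega>) \<partial>M)"
    by simp
  also have "\<dots> = (\<integral>\<^sup>+pz. emeasure M {\<omega>\<in>space M. (path_upto n \<omega>, next_incr n \<omega>) = pz} * case_prod G pz
      \<partial>count_space UNIV)"
    by (rule nn_integral_countable_rv) measurable
  also have "\<dots> = (\<integral>\<^sup>+(p, z). ennreal (path_prob n p) * (ennreal (incr_kernel (path_phase p) z) * G p z)
      \<partial>count_space UNIV)"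
    by (intro nn_integral_cong, clarify)
      (simp add: emeasure_eq_measure prob_path_next_incr ennreal_mult incr_kernel_nonneg path_prob_def mult.assoc)
  also have "\<dots> = (\<integral>\<^sup>+p. \<integral>\<^sup>+z. ennreal (path_prob n p) * (ennreal (incr_kernel (path_phase p) z) * G p z)
      \<partial>count_space UNIV \<partial>count_space UNIV)"
    using nn_integral_count_space_pair[of "\<lambda>(p, z). ennreal (path_prob n p) * (ennreal (incr_kernel (path_phase p) z) * G p z)"]
    by simp
  also have "\<dots> = (\<integral>\<^sup>+p. ennreal (path_prob n p) * R p \<partial>count_space UNIV)"
    by (simp add: R_def nn_integral_cmult)
  also have "\<dots> = (\<integral>\<^sup>+\<omega>. R (path_upto n \<omega>) \<partial>M)"
    by (simp add: nn_integral_countable_rv[of "path_upto n"] path_prob_def emeasure_eq_measure)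
  finally show ?thesis by (simp add: R_def)
qed

lemma integral_next_incr:
  fixes G :: "path \<Rightarrow> incr \<Rightarrow> 'b::{banach,second_countable_topology}"
  assumes bnd: "\<And>p z. norm (G p z) \<le> C"
  shows "integral\<^sup>L M (\<lambda>\<omega>. G (path_upto n \<omega>) (next_incr n \<omega>))
       = integral\<^sup>L M (\<lambda>\<omega>. infsetsum (\<lambda>z. incr_kernel (path_phase (path_upto n \<omega>)) z *\<^sub>R G (path_upto n \<omega>) z) UNIV)"
proof -
  define R where "R p = infsetsum (\<lambda>z. incr_kernel (path_phase p) z *\<^sub>R G p z) UNIV" for p
  define F where "F = (\<lambda>(p, z). path_prob n p *\<^sub>R (incr_kernel (path_phase p) z *\<^sub>R G p z))"
  have pmf: "prob {\<omega>\<in>space M. (path_upto n \<omega>, next_incr n \<omega>) = pz} *\<^sub>R case_prod G pz = F pz" for pz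
    by (cases pz) (simp add: F_def prob_path_next_incr)
  have meas: "(\<lambda>\<omega>. (path_upto n \<omega>, next_incr n \<omega>)) \<in> M \<rightarrow>\<^sub>M count_space UNIV"
    by measurable
  have bnd': "norm (case_prod G pz) \<le> C" for pz
    by (cases pz) (simp add: bnd)
  have S: "F abs_summable_on UNIV \<times> UNIV"
    using integral_countable_rv_bounded(1)[where F="case_prod G", OF meas bnd'] by (simp add: pmf)
  have "integral\<^sup>L M (\<lambda>\<omega>. G (path_upto n \<omega>) (next_incr n \<omega>))
      = integral\<^sup>L M (\<lambda>\<omega>. case_prod G (path_upto n \<omega>, next_incr n \<omega>))"
    by simp
  also have "\<dots> = infsetsum F (UNIV \<times> UNIV)"
    using integral_countable_rv_bounded(2)[where F="case_prod G", OF meas bnd'] by (simp add: pmf)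
  also have "\<dots> = infsetsum (\<lambda>p. path_prob n p *\<^sub>R R p) UNIV"
    using S unfolding F_def by (subst infsetsum_Times'[symmetric]) (simp_all add: R_def infsetsum_scaleR_right[symmetric])
  also have "\<dots> = integral\<^sup>L M (\<lambda>\<omega>. R (path_upto n \<omega>))"
  proof -
    have "(\<lambda>p. infsetsum (\<lambda>z. path_prob n p *\<^sub>R (incr_kernel (path_phase p) z *\<^sub>R G p z)) UNIV) abs_summable_on UNIV"
      using S unfolding F_def by (intro abs_summable_on_Sigma_project1') simp_all
    then have "(\<lambda>p. prob {\<omega>\<in>space M. path_upto n \<omega> = p} *\<^sub>R R p) abs_summable_on UNIV"
      by (simp add: R_def path_prob_def infsetsum_scaleR_right[symmetric])
    then show ?thesis
      by (simp add: integral_countable_rv[OF measurable_path_upto] path_prob_def)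
  qed
  finally show ?thesis by (simp add: R_def)
qed

lemma nn_integral_incr_kernel_product:
  assumes i: "i \<in> {1..N}"
  shows "(\<integral>\<^sup>+z. ennreal (incr_kernel i z) * (\<psi> (fst z) * \<phi> (fst (snd z)) * \<theta> (snd (snd z))) \<partial>count_space UNIV)
     = (\<Sum>j\<in>{1..N}. \<psi> j * (\<integral>\<^sup>+k. ennreal (a i j k) * \<phi> k \<partial>count_space UNIV)
                        * (\<integral>\<^sup>+b. ennreal (pB b) * \<theta> b \<partial>count_space UNIV))"
proof -
  define g where "g j = \<psi> j * (\<integral>\<^sup>+k. ennreal (a i j k) * \<phi> k \<partial>count_space UNIV)
                        * (\<integral>\<^sup>+b. ennreal (pB b) * \<theta> b \<partial>count_space UNIV)" for j
  have "(\<integral>\<^sup>+z. ennreal (incr_kernel i z) * (\<psi> (fst z) * \<phi> (fst (snd z)) * \<theta> (snd (snd z))) \<partial>count_space UNIV)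
      = (\<integral>\<^sup>+j. \<integral>\<^sup>+(k, b). ennreal (incr_kernel i (j, k, b)) * (\<psi> j * \<phi> k * \<theta> b)
           \<partial>count_space UNIV \<partial>count_space UNIV)"
    using nn_integral_count_space_pair[of "\<lambda>z. ennreal (incr_kernel i z) * (\<psi> (fst z) * \<phi> (fst (snd z)) * \<theta> (snd (snd z)))"]
    by (simp add: case_prod_beta')
  also have "\<dots> = (\<integral>\<^sup>+j. g j * indicator {1..N} j \<partial>count_space UNIV)"
  proof (rule nn_integral_cong)
    fix j
    have "(\<integral>\<^sup>+(k, b). ennreal (incr_kernel i (j, k, b)) * (\<psi> j * \<phi> k * \<theta> b) \<partial>count_space UNIV)
        = (\<integral>\<^sup>+kb. (\<psi> j * indicator {1..N} j)
              * ((ennreal (a i j (fst kb)) * \<phi> (fst kb)) * (ennreal (pB (snd kb)) * \<theta> (snd kb)))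
            \<partial>count_space UNIV)"
      using i by (intro nn_integral_cong)
        (auto simp: incr_kernel_def ennreal_mult a_nonneg pB_nonneg indicator_def ac_simps)
    also have "\<dots> = g j * indicator {1..N} j"
      by (simp only: nn_integral_cmult borel_measurable_count_space
          nn_integral_count_space_pair_mult[of "\<lambda>k. ennreal (a i j k) * \<phi> k" "\<lambda>b. ennreal (pB b) * \<theta> b"])
        (simp add: g_def ac_simps)
    finally show "(\<integral>\<^sup>+(k, b). ennreal (incr_kernel i (j, k, b)) * (\<psi> j * \<phi> k * \<theta> b) \<partial>count_space UNIV)
        = g j * indicator {1..N} j" .
  qed
  also have "\<dots> = (\<Sum>j\<in>{1..N}. g j)"
    by (simp add: nn_integral_count_space_indicator[symmetric] nn_integral_count_space_finite)
  finally show ?thesis by (simp add: g_def)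
qed

lemma nn_integral_incr_kernel:
  assumes i: "i \<in> {1..N}"
  shows "(\<integral>\<^sup>+z. ennreal (incr_kernel i z) \<partial>count_space UNIV) = 1"
proof -
  have "(\<integral>\<^sup>+z. ennreal (incr_kernel i z) \<partial>count_space UNIV) = (\<Sum>j\<in>{1..N}. ennreal (\<Sum>k. a i j k))"
    using nn_integral_incr_kernel_product[OF i, of "\<lambda>_. 1" "\<lambda>_. 1" "\<lambda>_. 1"] a_summable[OF i] pB_sums
    by (simp add: nn_integral_count_space_nat_real a_nonneg pB_nonneg sums_iff)
  also have "\<dots> = ennreal (\<Sum>j\<in>{1..N}. \<Sum>k. a i j k)"
    using a_summable[OF i] by (intro sum_ennreal) (auto intro: suminf_nonneg a_nonneg)
  finally show ?thesis using P_stoch i by (simp add: stochastic_mat_def)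
qed

lemma infsetsum_incr_kernel_gf:
  fixes z :: complex and \<theta> :: "nat \<Rightarrow> complex"
  assumes i: "i \<in> {1..N}" and j: "j \<in> {1..N}"
    and z: "norm z \<le> 1" and \<theta>: "\<And>b. norm (\<theta> b) \<le> 1"
  shows "infsetsum (\<lambda>y. incr_kernel i y *\<^sub>R ((if fst y = j then 1 else 0) * z ^ fst (snd y) * \<theta> (snd (snd y)))) UNIV
       = gf (a i j) z * (\<Sum>b. pB b *\<^sub>R \<theta> b)"
proof -
  define F where "F y = incr_kernel i y *\<^sub>R ((if fst y = j then 1 else 0) * z ^ fst (snd y) * \<theta> (snd (snd y)))" for y
  have sa: "(\<lambda>k. a i j k *\<^sub>R z ^ k) abs_summable_on UNIV"
    unfolding abs_summable_on_nat_iff'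
    by (rule summable_comparison_test[OF _ a_summable[OF i j]])
      (use z a_nonneg in \<open>auto intro!: exI[of _ 0] simp: norm_power power_le_one mult_left_le\<close>)
  have sb: "(\<lambda>b. pB b *\<^sub>R \<theta> b) abs_summable_on UNIV"
    unfolding abs_summable_on_nat_iff'
    by (rule summable_comparison_test[OF _ sums_summable[OF pB_sums]])
      (use \<theta> pB_nonneg in \<open>auto intro!: exI[of _ 0] simp: mult_left_le\<close>)
  have "infsetsum F UNIV = infsetsum F (Pair j ` UNIV)"
    by (rule infsetsum_cong_neutral) (auto simp: F_def)
  also have "\<dots> = infsetsum (\<lambda>(k, b). (a i j k *\<^sub>R z ^ k) * (pB b *\<^sub>R \<theta> b)) UNIV"
    using i j by (subst infsetsum_reindex) (auto simp: F_def incr_kernel_def case_prod_beta inj_def intro!: infsetsum_cong)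
  also have "\<dots> = infsetsum (\<lambda>k. a i j k *\<^sub>R z ^ k) UNIV * infsetsum (\<lambda>b. pB b *\<^sub>R \<theta> b) UNIV"
    using infsetsum_product[OF _ _ sa sb] by simp
  also have "\<dots> = gf (a i j) z * (\<Sum>b. pB b *\<^sub>R \<theta> b)"
    using sa sb by (simp add: infsetsum_nat' gf_eq_suminf_scaleR)
  finally show ?thesis by (simp add: F_def)
qed

lemma X_Suc_plus_one:
  assumes "\<omega> \<in> space M"
  shows "X (Suc n) \<omega> + 1 = A (Suc n) \<omega> + (if X n \<omega> = 0 then B (Suc n) \<omega> else X n \<omega>)"
  using B_pos[of "Suc n" \<omega>] assms by auto

section \<open>The functional equation\<close>

definition state_gf :: "nat \<Rightarrow> nat \<Rightarrow> complex \<Rightarrow> complex" where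
  "state_gf n i z = integral\<^sup>L M (\<lambda>\<omega>. z ^ X n \<omega> * indicator {\<omega>'. J (Suc n) \<omega>' = i} \<omega>)"

lemma state_gf_tendsto: "i \<in> {1..N} \<Longrightarrow> norm z \<le> 1 \<Longrightarrow> (\<lambda>n. state_gf n i z) \<longlonglongrightarrow> f i z"
  unfolding state_gf_def by (rule f_lim)

lemma integrable_state_gf:
  fixes z :: complex
  assumes "norm z \<le> 1"
  shows "integrable M (\<lambda>\<omega>. z ^ X n \<omega> * indicator {\<omega>'. J (Suc n) \<omega>' = i} \<omega>)"
proof (rule integrable_const_bound[where B=1])
  show "AE \<omega> in M. norm (z ^ X n \<omega> * indicator {\<omega>'. J (Suc n) \<omega>' = i} \<omega>) \<le> 1"
    using assms by (auto simp: norm_mult norm_power power_le_one indicator_def)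
  have "(\<lambda>\<omega>. if J (Suc n) \<omega> = i then z ^ X n \<omega> else 0) \<in> borel_measurable M"
    by measurable
  then show "(\<lambda>\<omega>. z ^ X n \<omega> * indicator {\<omega>'. J (Suc n) \<omega>' = i} \<omega>) \<in> borel_measurable M"
    by (simp add: indicator_def if_distrib cong: if_cong)
qed

lemma incr_kernel_average_gf:
  fixes z :: complex
  assumes i: "i \<in> {1..N}" and j: "j \<in> {1..N}" and z: "norm z \<le> 1"
  shows "infsetsum (\<lambda>y. incr_kernel i y *\<^sub>R ((if fst y = j then 1 else 0) * z ^ fst (snd y)
           * (if x = 0 then z ^ snd (snd y) else z ^ x))) UNIV
       = gf (a i j) z * (if x = 0 then gf pB z else z ^ x)"
proof -
  have "norm (if x = 0 then z ^ b else z ^ x) \<le> 1" for b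
    using z by (simp add: norm_power power_le_one)
  then have "infsetsum (\<lambda>y. incr_kernel i y *\<^sub>R ((if fst y = j then 1 else 0) * z ^ fst (snd y)
           * (if x = 0 then z ^ snd (snd y) else z ^ x))) UNIV
       = gf (a i j) z * (\<Sum>b. pB b *\<^sub>R (if x = 0 then z ^ b else z ^ x))"
    by (rule infsetsum_incr_kernel_gf[OF i j z])
  also have "(\<Sum>b. pB b *\<^sub>R (if x = 0 then z ^ b else z ^ x)) = (if x = 0 then gf pB z else z ^ x)"
  proof (cases "x = 0")
    case False
    have "(\<Sum>b. pB b *\<^sub>R z ^ x) = (\<Sum>b. pB b) *\<^sub>R z ^ x"
      by (rule suminf_scaleR_left[OF sums_summable[OF pB_sums], symmetric])
    then show ?thesis using False pB_sums by (simp add: sums_iff)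
  qed (simp add: gf_eq_suminf_scaleR)
  finally show ?thesis .
qed

text \<open>Conditioning on the path up to time \<open>n\<close>: the new phase is \<open>j\<close> with the generating function
  \<open>A\<^sub>i\<^sub>j(z)\<close> of arrivals, and an empty queue is refilled by a batch of generating function \<open>B(z)\<close>.\<close>
lemma state_gf_Suc:
  fixes z :: complex
  assumes z: "norm z \<le> 1" and j: "j \<in> {1..N}"
  shows "z * state_gf (Suc n) j z
       = (\<Sum>i\<in>{1..N}. gf (a i j) z * (state_gf n i z - state_gf n i 0 + gf pB z * state_gf n i 0))"
proof -
  define G where "G p y = (if fst y = j then 1 else 0) * z ^ fst (snd y)
      * (if queue_of (snd p) = 0 then z ^ snd (snd y) else z ^ queue_of (snd p))" for p :: path and y :: incr
  define ind where "ind i \<omega> = (indicator {\<omega>'. J (Suc n) \<omega>' = i} \<omega> :: complex)" for i \<omega>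
  have G_bound: "norm (G p y) \<le> 1" for p y
    using z by (simp add: G_def norm_mult norm_power power_le_one mult_le_one)
  have step: "z * (z ^ X (Suc n) \<omega> * indicator {\<omega>'. J (Suc (Suc n)) \<omega>' = j} \<omega>)
      = G (path_upto n \<omega>) (next_incr n \<omega>)" if "\<omega> \<in> space M" for \<omega>
  proof -
    have "z * z ^ X (Suc n) \<omega> = z ^ (X (Suc n) \<omega> + 1)"
      by (simp del: Xproc.simps)
    also have "\<dots> = z ^ A (Suc n) \<omega> * (if X n \<omega> = 0 then z ^ B (Suc n) \<omega> else z ^ X n \<omega>)"
      by (simp only: X_Suc_plus_one[OF that]) (simp add: power_add)
    finally have "z * z ^ X (Suc n) \<omega> = \<dots>" .
    then show ?thesis
      by (simp add: G_def next_incr_def X_eq_queue_of[symmetric] indicator_def del: Xproc.simps)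
  qed
  have average: "infsetsum (\<lambda>y. incr_kernel (path_phase (path_upto n \<omega>)) y *\<^sub>R G (path_upto n \<omega>) y) UNIV
      = (\<Sum>i\<in>{1..N}. gf (a i j) z * (z ^ X n \<omega> * ind i \<omega> - 0 ^ X n \<omega> * ind i \<omega>
           + gf pB z * (0 ^ X n \<omega> * ind i \<omega>)))" if "\<omega> \<in> space M" for \<omega>
  proof -
    have i: "J (Suc n) \<omega> \<in> {1..N}" using J_range that by simp
    have "infsetsum (\<lambda>y. incr_kernel (path_phase (path_upto n \<omega>)) y *\<^sub>R G (path_upto n \<omega>) y) UNIV
        = gf (a (J (Suc n) \<omega>) j) z * (if X n \<omega> = 0 then gf pB z else z ^ X n \<omega>)"
      unfolding G_def J_eq_path_phase[symmetric] X_eq_queue_of[symmetric] by (rule incr_kernel_average_gf[OF i j z])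
    also have "\<dots> = (\<Sum>i\<in>{1..N}. if i = J (Suc n) \<omega> then gf (a i j) z * (if X n \<omega> = 0 then gf pB z else z ^ X n \<omega>) else 0)"
      using i by simp
    also have "\<dots> = (\<Sum>i\<in>{1..N}. gf (a i j) z * (z ^ X n \<omega> * ind i \<omega> - 0 ^ X n \<omega> * ind i \<omega>
           + gf pB z * (0 ^ X n \<omega> * ind i \<omega>)))"
      by (intro sum.cong) (auto simp: ind_def indicator_def)
    finally show ?thesis .
  qed
  have "z * state_gf (Suc n) j z = integral\<^sup>L M (\<lambda>\<omega>. G (path_upto n \<omega>) (next_incr n \<omega>))"
    unfolding state_gf_def by (subst integral_mult_right_zero[symmetric]) (rule Bochner_Integration.integral_cong[OF refl step])
  also have "\<dots> = integral\<^sup>L M (\<lambda>\<omega>. infsetsum (\<lambda>y. incr_kernel (path_phase (path_upto n \<omega>)) y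
      *\<^sub>R G (path_upto n \<omega>) y) UNIV)"
    by (rule integral_next_incr[OF G_bound])
  also have "\<dots> = integral\<^sup>L M (\<lambda>\<omega>. \<Sum>i\<in>{1..N}. gf (a i j) z * (z ^ X n \<omega> * ind i \<omega>
      - 0 ^ X n \<omega> * ind i \<omega> + gf pB z * (0 ^ X n \<omega> * ind i \<omega>)))"
    by (rule Bochner_Integration.integral_cong[OF refl average])
  also have "\<dots> = (\<Sum>i\<in>{1..N}. gf (a i j) z * (state_gf n i z - state_gf n i 0 + gf pB z * state_gf n i 0))"
    using integrable_state_gf[OF z] integrable_state_gf[of 0]
    by (simp add: state_gf_def ind_def)
  finally show ?thesis .
qed

lemma functional_equation_limit:
  fixes z :: complex
  assumes z: "norm z \<le> 1" and j: "j \<in> {1..N}"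
  shows "z * f j z = (\<Sum>i\<in>{1..N}. gf (a i j) z * (f i z - f i 0 + gf pB z * f i 0))"
proof (rule LIMSEQ_unique)
  show "(\<lambda>n. z * state_gf (Suc n) j z) \<longlonglongrightarrow> z * f j z"
    using state_gf_tendsto[OF j z] by (intro tendsto_mult_left) (rule LIMSEQ_Suc)
  show "(\<lambda>n. z * state_gf (Suc n) j z)
      \<longlonglongrightarrow> (\<Sum>i\<in>{1..N}. gf (a i j) z * (f i z - f i 0 + gf pB z * f i 0))"
    unfolding state_gf_Suc[OF z j] using z
    by (intro tendsto_sum tendsto_mult tendsto_const tendsto_add tendsto_diff state_gf_tendsto) auto
qed

lemma functional_equation:
  fixes z :: complex
  assumes z: "norm z \<le> 1" and j: "j \<in> {1..N}"
  shows "(z - gf (a j j) z) * f j z - (\<Sum>i\<in>{1..N} - {j}. gf (a i j) z * f i z)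
       = (gf pB z - 1) * (\<Sum>i\<in>{1..N}. gf (a i j) z * f i 0)"
proof -
  have "gf (a i j) z * (f i z - f i 0 + gf pB z * f i 0)
      = gf (a i j) z * f i z + (gf pB z - 1) * (gf (a i j) z * f i 0)" for i
    by (simp add: algebra_simps)
  then have "z * f j z = (\<Sum>i\<in>{1..N}. gf (a i j) z * f i z) + (gf pB z - 1) * (\<Sum>i\<in>{1..N}. gf (a i j) z * f i 0)"
    unfolding functional_equation_limit[OF z j] by (simp only: sum.distrib sum_distrib_left)
  moreover have "(\<Sum>i\<in>{1..N}. gf (a i j) z * f i z) = gf (a j j) z * f j z + (\<Sum>i\<in>{1..N} - {j}. gf (a i j) z * f i z)"
    using j by (simp add: sum.remove)
  ultimately show ?thesis by (simp add: field_simps)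
qed

section \<open>The generating functions on \<open>[0, 1]\<close>\<close>

definition state_gf_real :: "nat \<Rightarrow> nat \<Rightarrow> real \<Rightarrow> real" where
  "state_gf_real n i t = integral\<^sup>L M (\<lambda>\<omega>. t ^ X n \<omega> * indicator {\<omega>'. J (Suc n) \<omega>' = i} \<omega>)"

definition f_real :: "nat \<Rightarrow> real \<Rightarrow> real" where
  "f_real i t = Re (f i (complex_of_real t))"

lemma state_gf_of_real: "state_gf n i (complex_of_real t) = complex_of_real (state_gf_real n i t)"
proof -
  have "state_gf n i (complex_of_real t)
      = integral\<^sup>L M (\<lambda>\<omega>. complex_of_real (t ^ X n \<omega> * indicator {\<omega>'. J (Suc n) \<omega>' = i} \<omega>))"
    unfolding state_gf_def by (intro Bochner_Integration.integral_cong refl) (simp add: indicator_def)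
  then show ?thesis unfolding state_gf_real_def by (metis integral_complex_of_real)
qed

lemma
  assumes i: "i \<in> {1..N}" and t: "0 \<le> t" "t \<le> 1"
  shows state_gf_real_tendsto: "(\<lambda>n. state_gf_real n i t) \<longlonglongrightarrow> f_real i t"
    and f_of_real: "f i (complex_of_real t) = complex_of_real (f_real i t)"
proof -
  have lim: "(\<lambda>n. complex_of_real (state_gf_real n i t)) \<longlonglongrightarrow> f i (complex_of_real t)"
    using state_gf_tendsto[OF i, of "complex_of_real t"] t by (simp add: state_gf_of_real)
  from tendsto_Re[OF lim] show "(\<lambda>n. state_gf_real n i t) \<longlonglongrightarrow> f_real i t"
    by (simp add: f_real_def)
  from tendsto_Im[OF lim] have "(\<lambda>n. 0) \<longlonglongrightarrow> Im (f i (complex_of_real t))"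
    by simp
  then have "Im (f i (complex_of_real t)) = 0"
    using LIMSEQ_unique tendsto_const by blast
  then show "f i (complex_of_real t) = complex_of_real (f_real i t)"
    by (simp add: f_real_def complex_eq_iff)
qed

lemma state_gf_real_mono:
  assumes "0 \<le> s" "s \<le> t" "t \<le> 1"
  shows "state_gf_real n i s \<le> state_gf_real n i t"
proof -
  have int: "integrable M (\<lambda>\<omega>. r ^ X n \<omega> * indicator {\<omega>'. J (Suc n) \<omega>' = i} \<omega>)"
    if "0 \<le> r" "r \<le> 1" for r :: real
  proof -
    have "(\<lambda>\<omega>. complex_of_real (r ^ X n \<omega> * indicator {\<omega>'. J (Suc n) \<omega>' = i} \<omega>))
        = (\<lambda>\<omega>. complex_of_real r ^ X n \<omega> * indicator {\<omega>'. J (Suc n) \<omega>' = i} \<omega>)"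
      by (auto simp: indicator_def)
    then show ?thesis
      using integrable_state_gf[of "complex_of_real r" n i] that
      by (simp add: complex_of_real_integrable_eq[symmetric])
  qed
  show ?thesis unfolding state_gf_real_def
    by (rule integral_mono[OF int int]) (use assms in \<open>auto simp: indicator_def power_mono\<close>)
qed

lemma f_real_mono: "i \<in> {1..N} \<Longrightarrow> 0 \<le> s \<Longrightarrow> s \<le> t \<Longrightarrow> t \<le> 1 \<Longrightarrow> f_real i s \<le> f_real i t"
  by (rule LIMSEQ_le[OF state_gf_real_tendsto state_gf_real_tendsto]) (auto intro: state_gf_real_mono)

lemma functional_equation_real:
  assumes j: "j \<in> {1..N}" and t: "0 \<le> t" "t \<le> 1"
  shows "t * f_real j t = (\<Sum>i\<in>{1..N}. gf_real (a i j) t * (f_real i t - f_real i 0 + gf_real pB t * f_real i 0))"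
proof -
  have "complex_of_real (t * f_real j t) = complex_of_real t * f j (complex_of_real t)"
    using f_of_real[OF j t] by simp
  also have "\<dots> = (\<Sum>i\<in>{1..N}. gf (a i j) (complex_of_real t) *
      (f i (complex_of_real t) - f i 0 + gf pB (complex_of_real t) * f i 0))"
    using t by (intro functional_equation_limit j) simp
  also have "\<dots> = complex_of_real (\<Sum>i\<in>{1..N}. gf_real (a i j) t * (f_real i t - f_real i 0 + gf_real pB t * f_real i 0))"
    using t a_summable[OF _ j] sums_summable[OF pB_sums] f_of_real[of _ 0] f_of_real[OF _ t]
    by (simp add: gf_of_real a_nonneg pB_nonneg)
  finally show ?thesis by (simp only: of_real_eq_iff)
qed

definition phase_prob :: "nat \<Rightarrow> nat \<Rightarrow> real" where
  "phase_prob n i = prob {\<omega>\<in>space M. J (Suc n) \<omega> = i}"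

definition empty_prob :: "nat \<Rightarrow> nat \<Rightarrow> real" where
  "empty_prob n i = prob {\<omega>\<in>space M. X n \<omega> = 0 \<and> J (Suc n) \<omega> = i}"

lemma state_gf_real_1: "state_gf_real n i 1 = phase_prob n i"
proof -
  have "state_gf_real n i 1 = integral\<^sup>L M (indicator {\<omega>\<in>space M. J (Suc n) \<omega> = i})"
    unfolding state_gf_real_def by (intro Bochner_Integration.integral_cong refl) (simp add: indicator_def)
  then show ?thesis by (simp add: phase_prob_def)
qed

lemma state_gf_real_0: "state_gf_real n i 0 = empty_prob n i"
proof -
  have "state_gf_real n i 0 = integral\<^sup>L M (indicator {\<omega>\<in>space M. X n \<omega> = 0 \<and> J (Suc n) \<omega> = i})"
    unfolding state_gf_real_def
    by (intro Bochner_Integration.integral_cong refl) (auto simp: indicator_def power_0_left)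
  then show ?thesis by (simp add: empty_prob_def)
qed

lemma sum_phase_prob: "(\<Sum>i\<in>{1..N}. phase_prob n i) = 1"
proof -
  have "(\<Sum>i\<in>{1..N}. phase_prob n i) = prob (\<Union>i\<in>{1..N}. {\<omega>\<in>space M. J (Suc n) \<omega> = i})"
    unfolding phase_prob_def by (rule finite_measure_finite_Union[symmetric]) (auto simp: disjoint_family_on_def)
  also have "(\<Union>i\<in>{1..N}. {\<omega>\<in>space M. J (Suc n) \<omega> = i}) = space M"
    using J_range[of "Suc n"] by auto
  finally show ?thesis by (simp add: prob_space)
qed

lemma f_real_1: "i \<in> {1..N} \<Longrightarrow> f_real i 1 = \<pi> i"
proof -
  have "(\<Sum>i\<in>{1..N}. f_real i 1 * (\<Sum>k. a i j k)) = f_real j 1" if "j \<in> {1..N}" for j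
  proof -
    have "gf_real c 1 = (\<Sum>k. c k)" for c by (simp add: gf_real_def)
    moreover have "(\<Sum>k. pB k) = 1" using pB_sums by (simp add: sums_iff)
    ultimately show ?thesis
      using functional_equation_real[OF that, of 1] by (simp add: mult.commute)
  qed
  then have "invariant_vector N (\<lambda>i j. \<Sum>k. a i j k) (\<lambda>i. f_real i 1)"
    by (simp add: invariant_vector_def)
  moreover have "(\<Sum>i\<in>{1..N}. f_real i 1) = 1"
  proof (rule LIMSEQ_unique)
    show "(\<lambda>n. \<Sum>i\<in>{1..N}. state_gf_real n i 1) \<longlonglongrightarrow> (\<Sum>i\<in>{1..N}. f_real i 1)"
      by (intro tendsto_sum state_gf_real_tendsto) auto
    show "(\<lambda>n. \<Sum>i\<in>{1..N}. state_gf_real n i 1) \<longlonglongrightarrow> 1"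
      unfolding state_gf_real_1 sum_phase_prob by simp
  qed
  ultimately show "i \<in> {1..N} \<Longrightarrow> f_real i 1 = \<pi> i"
    using invariant_vector_eq_stationary[OF P_stoch P_irred \<pi>_stat, of "\<lambda>i. f_real i 1" i] by simp
qed

section \<open>Behaviour at \<open>1\<^sup>-\<close>\<close>

definition mean_arrivals :: "nat \<Rightarrow> real" where
  "mean_arrivals i = (\<Sum>j\<in>{1..N}. \<Sum>k. real k * a i j k)"

definition mean_batch :: real where
  "mean_batch = (\<Sum>k. real k * pB k)"

definition seq_to_one :: "nat \<Rightarrow> real" where
  "seq_to_one m = real m / real (Suc m)"

text \<open>The left limit of \<open>f_real i\<close> at \<open>1\<close>; since \<open>f\<close> need not be continuous at \<open>1\<close>, it is only
  known to be at most \<open>\<pi> i\<close>.\<close>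
definition f_left :: "nat \<Rightarrow> real" where
  "f_left i = (SUP m. f_real i (seq_to_one m))"

definition arrival_slope :: "nat \<Rightarrow> real \<Rightarrow> real" where
  "arrival_slope i t = (\<Sum>j\<in>{1..N}. slope_at_one (a i j) t)"

lemma seq_to_one_nonneg: "0 \<le> seq_to_one m"
  and seq_to_one_less_1: "seq_to_one m < 1"
  and seq_to_one_le_1: "seq_to_one m \<le> 1"
  by (simp_all add: seq_to_one_def)

lemma seq_to_one_tendsto: "seq_to_one \<longlonglongrightarrow> 1"
  unfolding seq_to_one_def[abs_def] by (rule LIMSEQ_n_over_Suc_n)

lemma incseq_seq_to_one: "incseq seq_to_one"
  unfolding incseq_def seq_to_one_def by (auto simp: field_simps)

lemma f_left_tendsto:
  assumes i: "i \<in> {1..N}"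
  shows "(\<lambda>m. f_real i (seq_to_one m)) \<longlonglongrightarrow> f_left i"
  unfolding f_left_def
proof (rule LIMSEQ_incseq_SUP)
  show "bdd_above (range (\<lambda>m. f_real i (seq_to_one m)))"
    using f_real_mono[OF i _ _ order_refl] f_real_1[OF i] seq_to_one_nonneg seq_to_one_le_1
    by (intro bdd_aboveI[of _ "\<pi> i"]) auto
  show "incseq (\<lambda>m. f_real i (seq_to_one m))"
    using incseq_seq_to_one seq_to_one_nonneg seq_to_one_le_1
    by (auto simp: incseq_def intro!: f_real_mono[OF i])
qed

lemma f_left_le: "i \<in> {1..N} \<Longrightarrow> f_left i \<le> \<pi> i"
  using f_real_mono[of i _ 1] f_real_1 seq_to_one_nonneg seq_to_one_le_1
  by (intro LIMSEQ_le_const2[OF f_left_tendsto]) auto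

lemma a_gf_real_tendsto:
  "i \<in> {1..N} \<Longrightarrow> j \<in> {1..N} \<Longrightarrow> (\<lambda>m. gf_real (a i j) (seq_to_one m)) \<longlonglongrightarrow> (\<Sum>k. a i j k)"
  by (intro gf_real_tendsto_at_one a_nonneg a_summable a_moment_summable seq_to_one_tendsto
      seq_to_one_nonneg seq_to_one_le_1)

lemma pB_gf_real_tendsto:
  "summable (\<lambda>k. real k * pB k) \<Longrightarrow> (\<lambda>m. gf_real pB (seq_to_one m)) \<longlonglongrightarrow> 1"
  using gf_real_tendsto_at_one[OF pB_nonneg sums_summable[OF pB_sums] _ seq_to_one_tendsto
      seq_to_one_nonneg seq_to_one_le_1] pB_sums
  by (simp add: sums_iff)

lemma f_left_invariant:
  assumes EB: "summable (\<lambda>k. real k * pB k)"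
  shows "invariant_vector N (\<lambda>i j. \<Sum>k. a i j k) f_left"
  unfolding invariant_vector_def
proof
  fix j assume j: "j \<in> {1..N}"
  have "(\<lambda>m. seq_to_one m * f_real j (seq_to_one m)) \<longlonglongrightarrow> 1 * f_left j"
    by (intro tendsto_mult seq_to_one_tendsto f_left_tendsto j)
  moreover have "(\<lambda>m. seq_to_one m * f_real j (seq_to_one m))
      \<longlonglongrightarrow> (\<Sum>i\<in>{1..N}. (\<Sum>k. a i j k) * (f_left i - f_real i 0 + 1 * f_real i 0))"
    unfolding functional_equation_real[OF j seq_to_one_nonneg seq_to_one_le_1] using j
    by (intro tendsto_sum tendsto_mult tendsto_add tendsto_diff tendsto_const a_gf_real_tendsto
        f_left_tendsto pB_gf_real_tendsto EB) auto
  ultimately show "(\<Sum>i\<in>{1..N}. f_left i * (\<Sum>k. a i j k)) = f_left j"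
    using LIMSEQ_unique by (fastforce simp: mult.commute)
qed

text \<open>Summing the real functional equation over \<open>j\<close> and cancelling a factor \<open>1 - t\<close>.\<close>
lemma sum_functional_equation_real:
  assumes EB: "summable (\<lambda>k. real k * pB k)" and t: "0 \<le> t" "t < 1"
  shows "(\<Sum>i\<in>{1..N}. (1 - arrival_slope i t) * f_real i t)
       = slope_at_one pB t * (\<Sum>i\<in>{1..N}. (1 - (1 - t) * arrival_slope i t) * f_real i 0)"
proof -
  define D where "D = slope_at_one pB t"
  have A: "(\<Sum>j\<in>{1..N}. gf_real (a i j) t) = 1 - (1 - t) * arrival_slope i t" if i: "i \<in> {1..N}" for i
  proof -
    have "(\<Sum>j\<in>{1..N}. gf_real (a i j) t) = (\<Sum>j\<in>{1..N}. (\<Sum>k. a i j k) - (1 - t) * slope_at_one (a i j) t)"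
      using t i by (intro sum.cong refl gf_real_eq_minus_slope a_nonneg a_summable a_moment_summable) auto
    also have "\<dots> = 1 - (1 - t) * arrival_slope i t"
      using P_stoch i by (simp add: sum_subtractf arrival_slope_def sum_distrib_left stochastic_mat_def)
    finally show ?thesis .
  qed
  have B: "gf_real pB t = 1 - (1 - t) * D"
    using gf_real_eq_minus_slope[OF pB_nonneg sums_summable[OF pB_sums] EB t(1)] t pB_sums
    by (simp add: D_def sums_iff)
  have "t * (\<Sum>j\<in>{1..N}. f_real j t)
      = (\<Sum>j\<in>{1..N}. \<Sum>i\<in>{1..N}. gf_real (a i j) t * (f_real i t - f_real i 0 + gf_real pB t * f_real i 0))"
    unfolding sum_distrib_left using t by (intro sum.cong refl functional_equation_real) auto
  also have "\<dots> = (\<Sum>i\<in>{1..N}. (\<Sum>j\<in>{1..N}. gf_real (a i j) t) * (f_real i t - f_real i 0 + gf_real pB t * f_real i 0))"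
    by (subst sum.swap) (simp add: sum_distrib_right)
  also have "\<dots> = (\<Sum>i\<in>{1..N}. (1 - (1 - t) * arrival_slope i t) * (f_real i t - (1 - t) * D * f_real i 0))"
  proof (intro sum.cong refl)
    fix i assume "i \<in> {1..N}"
    then show "(\<Sum>j\<in>{1..N}. gf_real (a i j) t) * (f_real i t - f_real i 0 + gf_real pB t * f_real i 0)
        = (1 - (1 - t) * arrival_slope i t) * (f_real i t - (1 - t) * D * f_real i 0)"
      by (simp only: A B) (simp add: algebra_simps)
  qed
  finally have E: "t * (\<Sum>j\<in>{1..N}. f_real j t)
      = (\<Sum>i\<in>{1..N}. (1 - (1 - t) * arrival_slope i t) * (f_real i t - (1 - t) * D * f_real i 0))" .
  have "(1 - t) * (\<Sum>i\<in>{1..N}. (arrival_slope i t - 1) * f_real i t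
        + D * ((1 - (1 - t) * arrival_slope i t) * f_real i 0))
      = (\<Sum>i\<in>{1..N}. t * f_real i t
        - (1 - (1 - t) * arrival_slope i t) * (f_real i t - (1 - t) * D * f_real i 0))"
    unfolding sum_distrib_left by (intro sum.cong refl) (simp add: algebra_simps)
  also have "\<dots> = 0" using E by (simp add: sum_subtractf sum_distrib_left)
  finally have "(\<Sum>i\<in>{1..N}. (arrival_slope i t - 1) * f_real i t
        + D * ((1 - (1 - t) * arrival_slope i t) * f_real i 0)) = 0"
    using t by simp
  then show ?thesis
    by (simp add: D_def sum.distrib sum_distrib_left algebra_simps sum_subtractf)
qed

lemma arrival_slope_tendsto: "i \<in> {1..N} \<Longrightarrow> (\<lambda>m. arrival_slope i (seq_to_one m)) \<longlonglongrightarrow> mean_arrivals i"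
  unfolding arrival_slope_def mean_arrivals_def
  by (intro tendsto_sum slope_at_one_tendsto a_nonneg a_moment_summable seq_to_one_tendsto
      seq_to_one_nonneg seq_to_one_le_1) auto

lemma f_left_balance:
  assumes EB: "summable (\<lambda>k. real k * pB k)"
  shows "(\<Sum>i\<in>{1..N}. (1 - mean_arrivals i) * f_left i) = mean_batch * (\<Sum>i\<in>{1..N}. f_real i 0)"
proof (rule LIMSEQ_unique)
  show "(\<lambda>m. \<Sum>i\<in>{1..N}. (1 - arrival_slope i (seq_to_one m)) * f_real i (seq_to_one m))
      \<longlonglongrightarrow> (\<Sum>i\<in>{1..N}. (1 - mean_arrivals i) * f_left i)"
    by (intro tendsto_sum tendsto_mult tendsto_diff tendsto_const arrival_slope_tendsto f_left_tendsto) auto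
  have "(\<lambda>m. slope_at_one pB (seq_to_one m)
        * (\<Sum>i\<in>{1..N}. (1 - (1 - seq_to_one m) * arrival_slope i (seq_to_one m)) * f_real i 0))
      \<longlonglongrightarrow> mean_batch * (\<Sum>i\<in>{1..N}. (1 - (1 - 1) * mean_arrivals i) * f_real i 0)"
    unfolding mean_batch_def
    by (intro tendsto_mult tendsto_sum tendsto_diff tendsto_const slope_at_one_tendsto pB_nonneg EB
        seq_to_one_tendsto seq_to_one_nonneg seq_to_one_le_1 arrival_slope_tendsto) auto
  then show "(\<lambda>m. \<Sum>i\<in>{1..N}. (1 - arrival_slope i (seq_to_one m)) * f_real i (seq_to_one m))
      \<longlonglongrightarrow> mean_batch * (\<Sum>i\<in>{1..N}. f_real i 0)"
    unfolding sum_functional_equation_real[OF EB seq_to_one_nonneg seq_to_one_less_1] by simp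
qed

section \<open>The drift of the queue length\<close>

lemma mean_arrivals_nonneg: "i \<in> {1..N} \<Longrightarrow> mean_arrivals i \<ge> 0"
  unfolding mean_arrivals_def by (intro sum_nonneg suminf_nonneg a_moment_summable) (auto simp: a_nonneg)

lemma mean_batch_nonneg: "summable (\<lambda>k. real k * pB k) \<Longrightarrow> mean_batch \<ge> 0"
  unfolding mean_batch_def by (intro suminf_nonneg) (simp_all add: pB_nonneg)

lemma incr_kernel_average_drift:
  assumes i: "i \<in> {1..N}" and EB: "summable (\<lambda>k. real k * pB k)"
  shows "(\<integral>\<^sup>+y. ennreal (incr_kernel i y) * (of_nat x + of_nat (fst (snd y))
            + (if x = 0 then of_nat (snd (snd y)) else 0)) \<partial>count_space UNIV)
       = of_nat x + ennreal (mean_arrivals i) + (if x = 0 then ennreal mean_batch else 0)"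
proof -
  have sum_P: "(\<Sum>j\<in>{1..N}. ennreal (\<Sum>k. a i j k)) = 1"
    using P_stoch i a_summable[OF i]
    by (subst sum_ennreal) (auto intro: suminf_nonneg a_nonneg simp: stochastic_mat_def)
  have "(\<integral>\<^sup>+y. ennreal (incr_kernel i y) * of_nat (fst (snd y)) \<partial>count_space UNIV)
      = (\<Sum>j\<in>{1..N}. ennreal (\<Sum>k. real k * a i j k))"
    using nn_integral_incr_kernel_product[OF i, of "\<lambda>_. 1" "of_nat" "\<lambda>_. 1"] a_moment_summable[OF i] pB_sums
    by (simp add: nn_integral_count_space_moment nn_integral_count_space_nat_real a_nonneg pB_nonneg sums_iff)
  also have "\<dots> = ennreal (mean_arrivals i)"
    unfolding mean_arrivals_def using i
    by (intro sum_ennreal) (auto intro!: suminf_nonneg a_moment_summable simp: a_nonneg)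
  finally have arrivals:
    "(\<integral>\<^sup>+y. ennreal (incr_kernel i y) * of_nat (fst (snd y)) \<partial>count_space UNIV) = ennreal (mean_arrivals i)" .
  have batch: "(\<integral>\<^sup>+y. ennreal (incr_kernel i y) * of_nat (snd (snd y)) \<partial>count_space UNIV) = ennreal mean_batch"
    using nn_integral_incr_kernel_product[OF i, of "\<lambda>_. 1" "\<lambda>_. 1" "of_nat"] a_summable[OF i] EB sum_P
    by (simp add: nn_integral_count_space_moment nn_integral_count_space_nat_real a_nonneg pB_nonneg
        mean_batch_def sum_distrib_right[symmetric])
  have "(\<integral>\<^sup>+y. ennreal (incr_kernel i y) * (of_nat x + of_nat (fst (snd y))
            + (if x = 0 then of_nat (snd (snd y)) else 0)) \<partial>count_space UNIV)
      = (\<integral>\<^sup>+y. ennreal (incr_kernel i y) * of_nat x \<partial>count_space UNIV)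
        + (\<integral>\<^sup>+y. ennreal (incr_kernel i y) * of_nat (fst (snd y)) \<partial>count_space UNIV)
        + (if x = 0 then \<integral>\<^sup>+y. ennreal (incr_kernel i y) * of_nat (snd (snd y)) \<partial>count_space UNIV else 0)"
    by (simp add: distrib_left nn_integral_add)
  then show ?thesis
    by (simp add: nn_integral_multc nn_integral_incr_kernel[OF i] arrivals batch)
qed

lemma nn_integral_phase_function:
  assumes c: "\<And>i. i \<in> {1..N} \<Longrightarrow> c i \<ge> 0" and Q: "{\<omega>\<in>space M. Q \<omega>} \<in> sets M"
  shows "(\<integral>\<^sup>+\<omega>. ennreal (c (J (Suc n) \<omega>)) * indicator {\<omega>\<in>space M. Q \<omega>} \<omega> \<partial>M)
       = ennreal (\<Sum>i\<in>{1..N}. c i * prob {\<omega>\<in>space M. Q \<omega> \<and> J (Suc n) \<omega> = i})"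
proof -
  have ev: "{\<omega>\<in>space M. Q \<omega> \<and> J (Suc n) \<omega> = i} \<in> sets M" for i
    using Q by measurable
  have "(\<integral>\<^sup>+\<omega>. ennreal (c (J (Suc n) \<omega>)) * indicator {\<omega>\<in>space M. Q \<omega>} \<omega> \<partial>M)
      = (\<integral>\<^sup>+\<omega>. (\<Sum>i\<in>{1..N}. ennreal (c i) * indicator {\<omega>\<in>space M. Q \<omega> \<and> J (Suc n) \<omega> = i} \<omega>) \<partial>M)"
  proof (rule nn_integral_cong)
    fix \<omega> assume "\<omega> \<in> space M"
    then have "J (Suc n) \<omega> \<in> {1..N}" using J_range by simp
    then show "ennreal (c (J (Suc n) \<omega>)) * indicator {\<omega>\<in>space M. Q \<omega>} \<omega>
        = (\<Sum>i\<in>{1..N}. ennreal (c i) * indicator {\<omega>\<in>space M. Q \<omega> \<and> J (Suc n) \<omega> = i} \<omega>)"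
      using \<open>\<omega> \<in> space M\<close> by (simp add: indicator_def if_distrib sum.delta cong: if_cong)
  qed
  also have "\<dots> = (\<Sum>i\<in>{1..N}. ennreal (c i) * ennreal (prob {\<omega>\<in>space M. Q \<omega> \<and> J (Suc n) \<omega> = i}))"
    using ev by (subst nn_integral_sum) (auto simp: nn_integral_cmult_indicator emeasure_eq_measure)
  also have "\<dots> = ennreal (\<Sum>i\<in>{1..N}. c i * prob {\<omega>\<in>space M. Q \<omega> \<and> J (Suc n) \<omega> = i})"
    using c by (subst sum_ennreal[symmetric]) (auto simp: ennreal_mult intro!: sum.cong)
  finally show ?thesis .
qed

lemma nn_integral_X_Suc:
  assumes EB: "summable (\<lambda>k. real k * pB k)"
  shows "(\<integral>\<^sup>+\<omega>. of_nat (X (Suc n) \<omega>) \<partial>M) + 1 = (\<integral>\<^sup>+\<omega>. of_nat (X n \<omega>) \<partial>M)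
     + ennreal (\<Sum>i\<in>{1..N}. mean_arrivals i * phase_prob n i)
     + ennreal (mean_batch * (\<Sum>i\<in>{1..N}. empty_prob n i))"
proof -
  define G where "G p y = (of_nat (queue_of (snd p)) + of_nat (fst (snd y))
      + (if queue_of (snd p) = 0 then of_nat (snd (snd y)) else 0) :: ennreal)" for p :: path and y :: incr
  have step: "of_nat (X (Suc n) \<omega>) + 1 = G (path_upto n \<omega>) (next_incr n \<omega>)" if "\<omega> \<in> space M" for \<omega>
  proof -
    have "(of_nat (X (Suc n) \<omega>) :: ennreal) + 1 = of_nat (X (Suc n) \<omega> + 1)"
      by simp
    also have "\<dots> = of_nat (X n \<omega> + A (Suc n) \<omega> + (if X n \<omega> = 0 then B (Suc n) \<omega> else 0))"
      unfolding X_Suc_plus_one[OF that] by (simp add: add.commute)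
    finally show ?thesis by (simp add: G_def X_eq_queue_of next_incr_def)
  qed
  have "(\<integral>\<^sup>+\<omega>. of_nat (X (Suc n) \<omega>) \<partial>M) + 1 = (\<integral>\<^sup>+\<omega>. of_nat (X (Suc n) \<omega>) + 1 \<partial>M)"
    by (subst nn_integral_add) (auto simp: emeasure_space_1)
  also have "\<dots> = (\<integral>\<^sup>+\<omega>. G (path_upto n \<omega>) (next_incr n \<omega>) \<partial>M)"
    by (intro nn_integral_cong) (rule step)
  also have "\<dots> = (\<integral>\<^sup>+\<omega>. of_nat (X n \<omega>) + ennreal (mean_arrivals (J (Suc n) \<omega>))
      + ennreal mean_batch * indicator {\<omega>\<in>space M. X n \<omega> = 0} \<omega> \<partial>M)"
    unfolding nn_integral_next_incr
  proof (rule nn_integral_cong)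
    fix \<omega> assume "\<omega> \<in> space M"
    then have i: "J (Suc n) \<omega> \<in> {1..N}" using J_range by simp
    show "(\<integral>\<^sup>+y. ennreal (incr_kernel (path_phase (path_upto n \<omega>)) y) * G (path_upto n \<omega>) y \<partial>count_space UNIV)
        = of_nat (X n \<omega>) + ennreal (mean_arrivals (J (Suc n) \<omega>))
          + ennreal mean_batch * indicator {\<omega>\<in>space M. X n \<omega> = 0} \<omega>"
      using incr_kernel_average_drift[OF i EB, of "X n \<omega>"] \<open>\<omega> \<in> space M\<close>
      by (simp add: G_def J_eq_path_phase X_eq_queue_of indicator_def)
  qed
  also have "\<dots> = (\<integral>\<^sup>+\<omega>. of_nat (X n \<omega>) \<partial>M)
      + (\<integral>\<^sup>+\<omega>. ennreal (mean_arrivals (J (Suc n) \<omega>)) * indicator {\<omega>\<in>space M. True} \<omega> \<partial>M)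
      + (\<integral>\<^sup>+\<omega>. ennreal mean_batch * indicator {\<omega>\<in>space M. X n \<omega> = 0} \<omega> \<partial>M)"
    by (simp add: nn_integral_add)
  also have "\<dots> = (\<integral>\<^sup>+\<omega>. of_nat (X n \<omega>) \<partial>M)
     + ennreal (\<Sum>i\<in>{1..N}. mean_arrivals i * phase_prob n i)
     + ennreal (mean_batch * (\<Sum>i\<in>{1..N}. empty_prob n i))"
    using nn_integral_phase_function[of mean_arrivals "\<lambda>_. True"]
      nn_integral_phase_function[of "\<lambda>_. mean_batch" "\<lambda>\<omega>. X n \<omega> = 0" n]
    by (simp add: mean_arrivals_nonneg mean_batch_nonneg[OF EB] phase_prob_def empty_prob_def
        sum_distrib_left)
  finally show ?thesis .
qed

definition drift :: "nat \<Rightarrow> real" where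
  "drift n = (\<Sum>i\<in>{1..N}. mean_arrivals i * phase_prob n i) + mean_batch * (\<Sum>i\<in>{1..N}. empty_prob n i) - 1"

text \<open>The partial sums of the drift are \<open>\<integral>X\<^sub>n - X\<^sub>0\<close>, proved together with the finiteness of \<open>\<integral>X\<^sub>n\<close>.\<close>
lemma drift_partial_sums_bounded:
  assumes EB: "summable (\<lambda>k. real k * pB k)"
  shows "real X0 + (\<Sum>m<n. drift m) \<ge> 0"
proof -
  have "(\<integral>\<^sup>+\<omega>. of_nat (X n \<omega>) \<partial>M) = ennreal (real X0 + (\<Sum>m<n. drift m))
      \<and> real X0 + (\<Sum>m<n. drift m) \<ge> 0"
  proof (induction n)
    case 0
    show ?case by (simp add: emeasure_space_1 ennreal_of_nat_eq_real_of_nat)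
  next
    case (Suc n)
    define S where "S = real X0 + (\<Sum>m<n. drift m)"
    define r where "r = (\<Sum>i\<in>{1..N}. mean_arrivals i * phase_prob n i)"
    define u where "u = mean_batch * (\<Sum>i\<in>{1..N}. empty_prob n i)"
    have r: "r \<ge> 0" unfolding r_def phase_prob_def
      by (intro sum_nonneg mult_nonneg_nonneg mean_arrivals_nonneg) auto
    have u: "u \<ge> 0" unfolding u_def empty_prob_def
      by (intro mult_nonneg_nonneg mean_batch_nonneg[OF EB] sum_nonneg) auto
    have eq: "(\<integral>\<^sup>+\<omega>. of_nat (X (Suc n) \<omega>) \<partial>M) + 1 = ennreal (S + r + u)"
      using nn_integral_X_Suc[OF EB, of n] Suc.IH r u by (simp add: S_def r_def u_def ennreal_plus)
    then have "1 \<le> ennreal (S + r + u)"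
      by (metis add.commute add_increasing2 order_refl zero_le)
    then have nonneg: "S + drift n \<ge> 0"
      by (simp add: drift_def r_def u_def)
    have split: "S + r + u = (S + drift n) + 1"
      by (simp add: drift_def r_def u_def)
    have "(\<integral>\<^sup>+\<omega>. of_nat (X (Suc n) \<omega>) \<partial>M) + 1 = ennreal (S + drift n) + 1"
      unfolding eq split using nonneg by (simp add: ennreal_plus)
    then have "(\<integral>\<^sup>+\<omega>. of_nat (X (Suc n) \<omega>) \<partial>M) = ennreal (S + drift n)"
      using ennreal_add_left_cancel[of 1] by (simp add: add.commute)
    with nonneg show ?case by (simp add: S_def)
  qed
  then show ?thesis by simp
qed

lemma drift_tendsto:
  "drift \<longlonglongrightarrow> (\<Sum>i\<in>{1..N}. \<pi> i * mean_arrivals i) + mean_batch * (\<Sum>i\<in>{1..N}. f_real i 0) - 1"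
proof -
  have "(\<lambda>m. \<Sum>i\<in>{1..N}. mean_arrivals i * phase_prob m i) \<longlonglongrightarrow> (\<Sum>i\<in>{1..N}. mean_arrivals i * f_real i 1)"
    unfolding state_gf_real_1[symmetric] by (intro tendsto_sum tendsto_mult tendsto_const state_gf_real_tendsto) auto
  moreover have "(\<lambda>m. mean_batch * (\<Sum>i\<in>{1..N}. empty_prob m i)) \<longlonglongrightarrow> mean_batch * (\<Sum>i\<in>{1..N}. f_real i 0)"
    unfolding state_gf_real_0[symmetric] by (intro tendsto_sum tendsto_mult tendsto_const state_gf_real_tendsto) auto
  moreover have "(\<Sum>i\<in>{1..N}. mean_arrivals i * f_real i 1) = (\<Sum>i\<in>{1..N}. \<pi> i * mean_arrivals i)"
    by (intro sum.cong refl) (simp add: f_real_1)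
  ultimately show ?thesis
    unfolding drift_def[abs_def] by (intro tendsto_diff tendsto_add tendsto_const) auto
qed

text \<open>The queue length cannot have negative mean, so the limiting drift is nonnegative.\<close>
lemma drift_lower_bound:
  assumes EB: "summable (\<lambda>k. real k * pB k)"
  shows "(\<Sum>i\<in>{1..N}. \<pi> i * mean_arrivals i) + mean_batch * (\<Sum>i\<in>{1..N}. f_real i 0) \<ge> 1"
  using nonneg_limit_if_partial_sums_bounded_below[OF drift_tendsto drift_partial_sums_bounded[OF EB]]
  by simp

section \<open>The probability of an empty queue\<close>

lemma mean_batch_ge_1:
  assumes EB: "summable (\<lambda>k. real k * pB k)"
  shows "mean_batch \<ge> 1"
proof -
  have "(\<Sum>k. pB k) \<le> (\<Sum>k. real k * pB k)"
  proof (rule suminf_le[OF _ sums_summable[OF pB_sums] EB])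
    show "pB k \<le> real k * pB k" for k
      using pB_0 pB_nonneg[of k] by (cases k) (auto simp: mult_le_cancel_right1)
  qed
  then show ?thesis using pB_sums by (simp add: mean_batch_def sums_iff)
qed

lemma sum_f_0:
  assumes EB: "summable (\<lambda>k. real k * pB k)"
  shows "(\<Sum>i\<in>{1..N}. f i 0) = complex_of_real
           ((1 - (\<Sum>i\<in>{1..N}. \<Sum>j\<in>{1..N}. \<pi> i * (\<Sum>k. real k * a i j k))) / (\<Sum>k. real k * pB k))"
proof -
  define \<rho> where "\<rho> = (\<Sum>i\<in>{1..N}. \<pi> i * mean_arrivals i)"
  define c where "c = (\<Sum>i\<in>{1..N}. f_left i)"
  define p0 where "p0 = (\<Sum>i\<in>{1..N}. f_real i 0)"
  have \<rho>_eq: "(\<Sum>i\<in>{1..N}. \<Sum>j\<in>{1..N}. \<pi> i * (\<Sum>k. real k * a i j k)) = \<rho>"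
    unfolding \<rho>_def mean_arrivals_def by (simp add: sum_distrib_left)
  have sum_\<pi>: "(\<Sum>i\<in>{1..N}. \<pi> i) = 1" using \<pi>_stat by (simp add: stationary_dist_def)
  have f_left_eq: "f_left i = c * \<pi> i" if "i \<in> {1..N}" for i
    unfolding c_def by (rule invariant_vector_eq_stationary[OF P_stoch P_irred \<pi>_stat f_left_invariant[OF EB] that])
  have "c \<le> (\<Sum>i\<in>{1..N}. \<pi> i)" unfolding c_def by (intro sum_mono f_left_le)
  then have c: "c \<le> 1" using sum_\<pi> by simp
  have "mean_batch * p0 = (\<Sum>i\<in>{1..N}. (1 - mean_arrivals i) * f_left i)"
    unfolding p0_def by (rule f_left_balance[OF EB, symmetric])
  also have "\<dots> = (\<Sum>i\<in>{1..N}. c * \<pi> i - c * (\<pi> i * mean_arrivals i))"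
    by (intro sum.cong refl) (simp add: f_left_eq algebra_simps)
  also have "\<dots> = c * (1 - \<rho>)"
    using sum_\<pi> by (simp add: sum_subtractf \<rho>_def sum_distrib_left[symmetric] right_diff_distrib)
  also have "\<dots> \<le> 1 - \<rho>"
    using mult_right_mono[OF c, of "1 - \<rho>"] \<rho>_less_1 \<rho>_eq by simp
  finally have "mean_batch * p0 = 1 - \<rho>"
    using drift_lower_bound[OF EB] by (simp add: \<rho>_def p0_def)
  then have "p0 = (1 - \<rho>) / mean_batch"
    using mean_batch_ge_1[OF EB] by (simp add: field_simps)
  moreover have "(\<Sum>i\<in>{1..N}. f i 0) = complex_of_real p0"
    unfolding p0_def using f_of_real[of _ 0] by simp
  ultimately show ?thesis unfolding \<rho>_eq by (simp add: mean_batch_def)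
qed

end

theorem mainTheorem10:
  fixes M :: "'s measure"
    and N :: nat
    and a :: "nat \<Rightarrow> nat \<Rightarrow> nat \<Rightarrow> real"
    and pB :: "nat \<Rightarrow> real"
    and \<pi> :: "nat \<Rightarrow> real"
    and A J B :: "nat \<Rightarrow> 's \<Rightarrow> nat"
    and X0 :: nat
    and f :: "nat \<Rightarrow> complex \<Rightarrow> complex"
  defines "P \<equiv> (\<lambda>i j. \<Sum>k. a i j k)"
    and "\<rho> \<equiv> (\<Sum>i\<in>{1..N}. \<Sum>j\<in>{1..N}. \<pi> i * (\<Sum>k. real k * a i j k))"
    and "X \<equiv> Xproc X0 A B"
  assumes N2: "N \<ge> 2"
    and a_nonneg: "\<And>i j k. a i j k \<ge> 0"
    and a_summ: "\<And>i j. i \<in> {1..N} \<Longrightarrow> j \<in> {1..N} \<Longrightarrow> summable (a i j)"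
    and alpha_fin: "\<And>i j. i \<in> {1..N} \<Longrightarrow> j \<in> {1..N} \<Longrightarrow> summable (\<lambda>k. real k * a i j k)"
    and P_stoch: "stochastic_mat N P"
    and P_irred: "irreducible_mat N P"
    and pi_stat: "stationary_dist N P \<pi>"
    and pB_nonneg: "\<And>k. pB k \<ge> 0"
    and pB0: "pB 0 = 0"
    and pB_sum: "pB sums 1"
    and prob: "prob_space M"
    and A_rv: "\<And>n. A n \<in> measurable M (count_space UNIV)"
    and J_rv: "\<And>n. J n \<in> measurable M (count_space UNIV)"
    and B_rv: "\<And>n. B n \<in> measurable M (count_space UNIV)"
    and J_range: "\<And>n \<omega>. n \<ge> 1 \<Longrightarrow> \<omega> \<in> space M \<Longrightarrow> J n \<omega> \<in> {1..N}"
    and B_pos: "\<And>n \<omega>. n \<ge> 1 \<Longrightarrow> \<omega> \<in> space M \<Longrightarrow> B n \<omega> \<ge> 1"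
    and joint_law: "\<And>n m jj kk bb.
       measure M {\<omega> \<in> space M. J 1 \<omega> = jj 1 \<and>
            (\<forall>t\<in>{1..n}. A t \<omega> = kk t \<and> J (Suc t) \<omega> = jj (Suc t)) \<and>
            (\<forall>t\<in>{1..m}. B t \<omega> = bb t)}
       = measure M {\<omega> \<in> space M. J 1 \<omega> = jj 1}
         * (\<Prod>t\<in>{1..n}. a (jj t) (jj (Suc t)) (kk t)) * (\<Prod>t\<in>{1..m}. pB (bb t))"
    and rho_lt: "\<rho> < 1"
    and f_lim: "\<And>j z. j \<in> {1..N} \<Longrightarrow> norm z \<le> 1 \<Longrightarrow>
       (\<lambda>n. integral\<^sup>L M (\<lambda>\<omega>. z ^ X n \<omega> * indicator {\<omega>'. J (Suc n) \<omega>' = j} \<omega>))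
         \<longlonglongrightarrow> f j z"
  shows "(\<forall>z j. norm z \<le> 1 \<longrightarrow> j \<in> {1..N} \<longrightarrow>
            (z - gf (a j j) z) * f j z - (\<Sum>i\<in>{1..N} - {j}. gf (a i j) z * f i z)
              = (gf pB z - 1) * (\<Sum>i\<in>{1..N}. gf (a i j) z * f i 0))
       \<and> (summable (\<lambda>k. real k * pB k) \<longrightarrow>
            (\<Sum>i\<in>{1..N}. f i 0) = complex_of_real ((1 - \<rho>) / (\<Sum>k. real k * pB k)))"
proof -
  interpret modulated_queue M N a pB \<pi> A J B X0 f
    using prob a_nonneg a_summ alpha_fin P_stoch P_irred pi_stat pB_nonneg pB0 pB_sum A_rv J_rv B_rv
      J_range B_pos joint_law rho_lt f_lim
    unfolding P_def \<rho>_def X_def by (intro modulated_queue.intro modulated_queue_axioms.intro) auto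
  show ?thesis
    unfolding \<rho>_def using functional_equation sum_f_0 by blast
qed

end
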